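(* Let $(\lambda,\varphi)$, $\lambda>0$, $\varphi\in L^2([0,1])$ nonzero, solve $$\int_0^1\Big(\int_0^x\!\!\int_0^y e^{\beta(x-u)}e^{\beta(y-v)}c_\alpha|u-v|^{-\alpha}\,dv\,du\Big)\varphi(y)\,dy=\lambda\varphi(x),\qquad x\in[0,1].$$ Define $\psi(x)=e^{-\beta x}\int_x^1e^{\beta r}\varphi(r)\,dr$, $u(x,t)=\int_0^1\psi(y)e^{-t|x-y|}\,dy$ for $t>0$, and $$\Phi_0(z)=-\frac{\Gamma(\alpha)\lambda}{c_\alpha}(\beta-z)\psi(0)+\int_0^\infty\frac{t^{\alpha-1}}{t-z}u(0,t)\,dt,\qquad \Phi_1(z)=-\frac{\Gamma(\alpha)\lambda}{c_\alpha}\psi'(1)+\int_0^\infty\frac{t^{\alpha-1}}{t-z}u(1,t)\,dt,$$ which are holomorphic on $\mathbb C\setminus\mathbb R_+$. Let $$\Lambda(z)=\frac{\Gamma(\alpha)\lambda}{c_\alpha}(z^2-\beta^2)+\int_0^\infty\frac{2t^\alpha}{t^2-z^2}\,dt,\qquad z\in\mathbb C\setminus\mathbb R.$$ Then the Laplace transform $\widehat\varphi(z)=\int_0^1e^{-zx}\varphi(x)\,dx$ satisfies, for all $z\in\mathbb C\setminus\mathbb R$ with $\Lambda(z)\ne0$, $$\widehat\varphi(z)=\widehat\varphi(-\beta)-\frac{z+\beta}{\Lambda(z)}\Big(\Phi_0(z)+e^{-z}\Phi_1(-z)\Big).$$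
   Context: Here $H\in(\frac12,1)$, $\alpha:=2-2H\in(0,1)$, $c_\alpha=(1-\frac\alpha2)(1-\alpha)$ and $\beta\in\mathbb R$. For $H>\frac12$ the kernel in the eigenvalue equation is the covariance function of the fractional Ornstein–Uhlenbeck process $X_t=\beta\int_0^tX_sds+B^H_t$ on $[0,1]$. *)

theory Defs
  imports "HOL-Analysis.Analysis"
begin

text \<open>Fractional OU setting: alpha = 2 - 2H, c_alpha = (1 - alpha/2)(1 - alpha).\<close>

definition c_alpha :: "real \<Rightarrow> real" where
  "c_alpha a = (1 - a / 2) * (1 - a)"

definition fou_kernel :: "real \<Rightarrow> real \<Rightarrow> real \<Rightarrow> real \<Rightarrow> real" where
  "fou_kernel a \<beta> x y =
     (LBINT u=0..x. (LBINT v=0..y.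
        exp (\<beta> * (x - u)) * exp (\<beta> * (y - v)) * c_alpha a * \<bar>u - v\<bar> powr (- a)))"

definition psi :: "real \<Rightarrow> (real \<Rightarrow> real) \<Rightarrow> real \<Rightarrow> real" where
  "psi \<beta> \<phi> x = exp (- \<beta> * x) * (LBINT r=x..1. exp (\<beta> * r) * \<phi> r)"

definition ufun :: "real \<Rightarrow> (real \<Rightarrow> real) \<Rightarrow> real \<Rightarrow> real \<Rightarrow> real" where
  "ufun \<beta> \<phi> x t = (LBINT y=0..1. psi \<beta> \<phi> y * exp (- t * \<bar>x - y\<bar>))"

definition Phi0 :: "real \<Rightarrow> real \<Rightarrow> real \<Rightarrow> (real \<Rightarrow> real) \<Rightarrow> complex \<Rightarrow> complex" where
  "Phi0 a \<beta> lam \<phi> z =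
     - complex_of_real (Gamma a * lam / c_alpha a) * (complex_of_real \<beta> - z)
         * complex_of_real (psi \<beta> \<phi> 0)
     + (LBINT t:{0<..}. complex_of_real (t powr (a - 1) * ufun \<beta> \<phi> 0 t) / (complex_of_real t - z))"

definition Phi1 :: "real \<Rightarrow> real \<Rightarrow> real \<Rightarrow> (real \<Rightarrow> real) \<Rightarrow> complex \<Rightarrow> complex" where
  "Phi1 a \<beta> lam \<phi> z =
     - complex_of_real (Gamma a * lam / c_alpha a)
         * complex_of_real (vector_derivative (psi \<beta> \<phi>) (at 1 within {0..1}))
     + (LBINT t:{0<..}. complex_of_real (t powr (a - 1) * ufun \<beta> \<phi> 1 t) / (complex_of_real t - z))"

definition Lam :: "real \<Rightarrow> real \<Rightarrow> real \<Rightarrow> complex \<Rightarrow> complex" where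
  "Lam a \<beta> lam z =
     complex_of_real (Gamma a * lam / c_alpha a) * (z ^ 2 - complex_of_real \<beta> ^ 2)
     + (LBINT t:{0<..}. complex_of_real (2 * t powr a) / (complex_of_real t ^ 2 - z ^ 2))"

definition laplace01 :: "(real \<Rightarrow> real) \<Rightarrow> complex \<Rightarrow> complex" where
  "laplace01 \<phi> z = (LBINT x=0..1. exp (- z * complex_of_real x) * complex_of_real (\<phi> x))"

end

theory Submission
  imports Defs
begin

text \<open>
  Write a for alpha and b for beta. Exchanging the order of integration in the eigenvalue
  equation gives lam phi(x) = int_0^x e^(b(x-u)) g(u) du with
  g(u) = c_alpha int_0^1 |u - v|^(-a) psi(v) dv. Hence phi is continuous, psi'(1) = -phi(1),
  and on Laplace transforms (z + b) psi^(z) = phi^(-b) - phi^(z) and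
  g^(z) = lam ((z - b) phi^(z) + e^(-z) phi(1)).
  Inserting Gamma(a) |u - v|^(-a) = int_0^oo t^(a-1) e^(-t|u-v|) dt and integrating
  e^(-t|u-v|) e^(-zu) over u in [0,1] turns Gamma(a) g^(z) into c_alpha times an integral in t
  of t^(a-1) [(psi^(z) - u(0,t))/(t - z) + (psi^(z) - e^(-z) u(1,t))/(t + z)].
  The two psi^(z)-terms combine into the integral in Lam(z), so solving for psi^(z) gives the
  formula. Every exchange of integrals is licensed by Tonelli, because
  int_0^1 |u - v|^(-a) dv <= 2/(1 - a) uniformly in u.
\<close>

section \<open>Measure-theoretic tools\<close>

lemma borel_measurable_lborel_pairI:
  "f \<in> borel_measurable (borel \<Otimes>\<^sub>M borel) \<Longrightarrow> f \<in> borel_measurable (lborel \<Otimes>\<^sub>M (lborel::real measure))"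
  by (simp add: measurable_def space_pair_measure sets_pair_measure_cong[OF sets_lborel sets_lborel])

lemma borel_measurable_borel_lborelI:
  "f \<in> borel_measurable (borel \<Otimes>\<^sub>M borel) \<Longrightarrow> f \<in> borel_measurable (borel \<Otimes>\<^sub>M (lborel::real measure))"
  by (simp add: measurable_def space_pair_measure sets_pair_measure_cong[OF refl sets_lborel])

lemma borel_measurable_lborel_tripleI:
  "f \<in> borel_measurable (borel \<Otimes>\<^sub>M (borel \<Otimes>\<^sub>M borel)) \<Longrightarrow> f \<in> borel_measurable (lborel \<Otimes>\<^sub>M (lborel \<Otimes>\<^sub>M (lborel::real measure)))"
  by (simp add: measurable_def space_pair_measure sets_pair_measure_cong[OF sets_lborel sets_pair_measure_cong[OF sets_lborel sets_lborel]])

lemma lborel_Fubini_integral: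
  fixes F :: "real \<Rightarrow> real \<Rightarrow> 'b::{banach,second_countable_topology}"
  assumes "integrable (lborel \<Otimes>\<^sub>M lborel) (\<lambda>(x,y). F x y)"
  shows "(\<integral>x. (\<integral>y. F x y \<partial>lborel) \<partial>lborel) = (\<integral>y. (\<integral>x. F x y \<partial>lborel) \<partial>lborel)"
  using lborel_pair.Fubini_integral[OF assms] by simp

lemma integrable_lborel_pairI:
  fixes F :: "real \<Rightarrow> real \<Rightarrow> 'b::{banach,second_countable_topology}"
  assumes m: "(\<lambda>(x,y). F x y) \<in> borel_measurable (lborel \<Otimes>\<^sub>M lborel)"
    and f: "(\<integral>\<^sup>+x. (\<integral>\<^sup>+y. ennreal (norm (F x y)) \<partial>lborel) \<partial>lborel) < \<infinity>"
  shows "integrable (lborel \<Otimes>\<^sub>M lborel) (\<lambda>(x,y). F x y)"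
proof -
  have "(\<integral>\<^sup>+p. ennreal (norm ((\<lambda>(x,y). F x y) p)) \<partial>(lborel \<Otimes>\<^sub>M lborel))
        = (\<integral>\<^sup>+x. (\<integral>\<^sup>+y. ennreal (norm (F x y)) \<partial>lborel) \<partial>lborel)"
    using lborel.nn_integral_fst[of "\<lambda>p. ennreal (norm ((\<lambda>(x,y). F x y) p))" lborel] m by simp
  thus ?thesis using m f by (simp add: integrable_iff_bounded)
qed

lemma integrable_lborel_pair_boundedI:
  fixes F :: "real \<Rightarrow> real \<Rightarrow> 'b::{banach,second_countable_topology}" and h :: "real \<Rightarrow> real"
  assumes m: "(\<lambda>(x,y). F x y) \<in> borel_measurable (lborel \<Otimes>\<^sub>M lborel)"
    and bnd: "\<And>x y. norm (F x y) \<le> K * indicator {0..1} x * h y"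
    and h: "\<And>y. 0 \<le> h y" and hm: "h \<in> borel_measurable borel"
    and hf: "(\<integral>\<^sup>+y. ennreal (h y) \<partial>lborel) < \<infinity>" and K: "0 \<le> K"
  shows "integrable (lborel \<Otimes>\<^sub>M lborel) (\<lambda>(x,y). F x y)"
proof (rule integrable_lborel_pairI[OF m])
  have "(\<integral>\<^sup>+x. (\<integral>\<^sup>+y. ennreal (norm (F x y)) \<partial>lborel) \<partial>lborel)
     \<le> (\<integral>\<^sup>+x. (\<integral>\<^sup>+y. ennreal (K * indicator {0..1} x) * ennreal (h y) \<partial>lborel) \<partial>(lborel::real measure))"
    using bnd K h by (intro nn_integral_mono) (simp add: ennreal_mult'[symmetric] ennreal_leI)
  also have "\<dots> = (\<integral>\<^sup>+x. ennreal (K * indicator {0..1} x) * (\<integral>\<^sup>+y. ennreal (h y) \<partial>lborel) \<partial>(lborel::real measure))"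
    by (intro nn_integral_cong nn_integral_cmult) (use hm in measurable)
  also have "\<dots> = (\<integral>\<^sup>+x. ((\<integral>\<^sup>+y. ennreal (h y) \<partial>lborel) * ennreal K) * indicator {0..1} x \<partial>(lborel::real measure))"
    using K by (intro nn_integral_cong) (auto simp: indicator_def mult.commute)
  also have "\<dots> = ((\<integral>\<^sup>+y. ennreal (h y) \<partial>lborel) * ennreal K) * emeasure lborel {0..1::real}"
    by (rule nn_integral_cmult_indicator) simp
  also have "\<dots> < \<infinity>" using hf by (simp add: ennreal_mult_less_top)
  finally show "(\<integral>\<^sup>+x. (\<integral>\<^sup>+y. ennreal (norm (F x y)) \<partial>lborel) \<partial>lborel) < \<infinity>" .
qed

lemma nn_integral_indicator_01_finite: "(\<integral>\<^sup>+y. ennreal (indicator {0..1::real} y) \<partial>lborel) < (\<infinity>::ennreal)"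
  by (subst ennreal_indicator, subst nn_integral_indicator) auto

interpretation lborel_triple: pair_sigma_finite "lborel :: real measure" "lborel \<Otimes>\<^sub>M (lborel :: real measure)" ..

lemma integrable_lborel_tripleI:
  fixes F :: "real \<Rightarrow> real \<Rightarrow> real \<Rightarrow> 'b::{banach,second_countable_topology}"
  assumes m: "(\<lambda>(y,(u,v)). F y u v) \<in> borel_measurable (lborel \<Otimes>\<^sub>M (lborel \<Otimes>\<^sub>M lborel))"
    and f: "(\<integral>\<^sup>+u. (\<integral>\<^sup>+v. (\<integral>\<^sup>+y. ennreal (norm (F y u v)) \<partial>lborel) \<partial>lborel) \<partial>lborel) < \<infinity>"
  shows "integrable (lborel \<Otimes>\<^sub>M (lborel \<Otimes>\<^sub>M lborel)) (\<lambda>(y,(u,v)). F y u v)"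
proof -
  let ?g = "\<lambda>q. ennreal (norm ((\<lambda>(y,(u,v)). F y u v) q))"
  have m2: "?g \<in> borel_measurable (lborel \<Otimes>\<^sub>M (lborel \<Otimes>\<^sub>M lborel))" using m by measurable
  have "(\<integral>\<^sup>+q. ?g q \<partial>(lborel \<Otimes>\<^sub>M (lborel \<Otimes>\<^sub>M lborel)))
        = (\<integral>\<^sup>+p. (\<integral>\<^sup>+y. ?g (y,p) \<partial>lborel) \<partial>(lborel \<Otimes>\<^sub>M lborel))"
    using lborel_triple.nn_integral_snd[OF m2] by simp
  also have "\<dots> = (\<integral>\<^sup>+u. (\<integral>\<^sup>+v. (\<integral>\<^sup>+y. ?g (y,(u,v)) \<partial>lborel) \<partial>lborel) \<partial>lborel)"
    by (rule lborel.nn_integral_fst[symmetric]) (use m2 in measurable)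
  finally show ?thesis using m f by (simp add: integrable_iff_bounded)
qed

lemma lborel_Fubini_integral_triple:
  fixes F :: "real \<Rightarrow> real \<Rightarrow> real \<Rightarrow> 'b::{banach,second_countable_topology}"
  assumes I: "integrable (lborel \<Otimes>\<^sub>M (lborel \<Otimes>\<^sub>M lborel)) (\<lambda>(y,(u,v)). F y u v)"
  shows "(\<integral>y. (\<integral>u. (\<integral>v. F y u v \<partial>lborel) \<partial>lborel) \<partial>lborel)
       = (\<integral>u. (\<integral>v. (\<integral>y. F y u v \<partial>lborel) \<partial>lborel) \<partial>lborel)"
proof -
  have I': "integrable (lborel \<Otimes>\<^sub>M (lborel \<Otimes>\<^sub>M lborel)) (\<lambda>(y,p). (\<lambda>(u,v). F y u v) p)"
    using I by (simp add: case_prod_beta')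
  have AE: "AE y in lborel. integrable (lborel \<Otimes>\<^sub>M lborel) (\<lambda>p. (\<lambda>(u,v). F y u v) p)"
    using lborel_triple.AE_integrable_fst[OF I'] by simp
  have "(\<integral>y. (\<integral>u. (\<integral>v. F y u v \<partial>lborel) \<partial>lborel) \<partial>lborel)
      = (\<integral>y. (\<integral>p. (\<lambda>(u,v). F y u v) p \<partial>(lborel \<Otimes>\<^sub>M lborel)) \<partial>lborel)"
  proof (intro integral_cong_AE)
    have m[measurable]: "(\<lambda>(y,(u,v)). F y u v) \<in> borel_measurable (lborel \<Otimes>\<^sub>M (lborel \<Otimes>\<^sub>M lborel))"
      using I by (rule borel_measurable_integrable)
    have m3[measurable]: "(\<lambda>x. F (fst (fst x)) (snd (fst x)) (snd x)) \<in> borel_measurable ((lborel \<Otimes>\<^sub>M lborel) \<Otimes>\<^sub>M lborel)"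
      using measurable_compose[OF _ m, of "\<lambda>x. (fst (fst x), (snd (fst x), snd x))" "(lborel \<Otimes>\<^sub>M lborel) \<Otimes>\<^sub>M lborel"]
      by (simp add: case_prod_beta')
    show "(\<lambda>y. \<integral>u. (\<integral>v. F y u v \<partial>lborel) \<partial>lborel) \<in> borel_measurable lborel" by measurable
    show "(\<lambda>y. \<integral>p. (\<lambda>(u,v). F y u v) p \<partial>(lborel \<Otimes>\<^sub>M lborel)) \<in> borel_measurable lborel" by measurable
    show "AE y in lborel. (\<integral>u. (\<integral>v. F y u v \<partial>lborel) \<partial>lborel) = (\<integral>p. (\<lambda>(u,v). F y u v) p \<partial>(lborel \<Otimes>\<^sub>M lborel))"
      using AE by eventually_elim (auto intro!: lborel_pair.integral_fst)
  qed
  also have "\<dots> = (\<integral>p. (\<integral>y. (\<lambda>(u,v). F y u v) p \<partial>lborel) \<partial>(lborel \<Otimes>\<^sub>M lborel))"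
    using lborel_triple.Fubini_integral[OF I'] by simp
  also have "\<dots> = (\<integral>u. (\<integral>v. (\<integral>y. F y u v \<partial>lborel) \<partial>lborel) \<partial>lborel)"
  proof -
    have "integrable (lborel \<Otimes>\<^sub>M lborel) (\<lambda>p. \<integral>y. (\<lambda>(u,v). F y u v) p \<partial>lborel)"
      using lborel_triple.integrable_snd[OF I'] by simp
    hence "integrable (lborel \<Otimes>\<^sub>M lborel) (\<lambda>(u,v). \<integral>y. F y u v \<partial>lborel)"
      by (simp add: case_prod_beta')
    from lborel_pair.integral_fst[OF this] show ?thesis by (simp add: case_prod_beta')
  qed
  finally show ?thesis .
qed

lemma integrable_of_real_mult_bounded:
  fixes f :: "real \<Rightarrow> real" and k :: "real \<Rightarrow> complex"
  assumes f: "integrable lborel f" "\<And>y. y \<notin> {0..1} \<Longrightarrow> f y = 0"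
    and km: "k \<in> borel_measurable borel" and kb: "\<And>y. y \<in> {0..1} \<Longrightarrow> norm (k y) \<le> K"
  shows "integrable lborel (\<lambda>y. complex_of_real (f y) * k y)"
proof (rule Bochner_Integration.integrable_bound)
  show "integrable lborel (\<lambda>y. K * \<bar>f y\<bar>)" using f(1) by auto
  show "(\<lambda>y. complex_of_real (f y) * k y) \<in> borel_measurable lborel"
    using km borel_measurable_integrable[OF f(1)] by measurable
  have "norm (complex_of_real (f y) * k y) \<le> K * \<bar>f y\<bar>" for y
    using mult_right_mono[OF kb, of y "\<bar>f y\<bar>"] f(2)[of y] by (cases "y \<in> {0..1}") (auto simp: norm_mult mult.commute)
  thus "AE y in lborel. norm (complex_of_real (f y) * k y) \<le> norm (K * \<bar>f y\<bar>)"
    by (intro AE_I2) (rule order_trans, assumption, simp)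
qed

section \<open>The weakly singular kernel\<close>

lemma nn_integral_powr_01:
  fixes a :: real assumes "0 < a" "a < 1"
  shows "(\<integral>\<^sup>+s. ennreal (indicator {0..1} s * s powr (-a)) \<partial>lborel) = ennreal (1/(1-a))"
proof -
  have "((\<lambda>s. s powr (-a)) has_integral (1 powr (-a+1) / (-a+1))) {0..1}"
    by (rule has_integral_powr_from_0) (use assms in auto)
  hence "integral\<^sup>N lborel (\<lambda>x. indicator {0..1} x * x powr (-a)) = 1 powr (-a+1) / (-a+1)"
    by (intro nn_integral_has_integral_lebesgue) auto
  thus ?thesis by simp
qed

lemma nn_integral_abs_powr_le:
  fixes a :: real assumes "0 < a" "a < 1"
  shows "(\<integral>\<^sup>+s. ennreal (indicator {-1..1} s * \<bar>s\<bar> powr (-a)) \<partial>lborel) \<le> ennreal (2/(1-a))"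
proof -
  define g where "g = (\<lambda>s::real. ennreal (indicator {0..1} s * s powr (-a)))"
  have gm: "g \<in> borel_measurable borel" unfolding g_def by measurable
  have "(\<integral>\<^sup>+s. ennreal (indicator {-1..1} s * \<bar>s\<bar> powr (-a)) \<partial>lborel)
     \<le> (\<integral>\<^sup>+s. g s + g (0 + (-1) * s) \<partial>lborel)"
    by (intro nn_integral_mono) (auto simp: g_def indicator_def)
  also have "\<dots> = (\<integral>\<^sup>+s. g s \<partial>lborel) + (\<integral>\<^sup>+s. g (0 + (-1) * s) \<partial>lborel)"
    by (rule nn_integral_add) (use gm in auto)
  also have "(\<integral>\<^sup>+s. g (0 + (-1) * s) \<partial>lborel) = (\<integral>\<^sup>+s. g s \<partial>lborel)"
    using nn_integral_real_affine[OF gm, of "-1" 0] by simp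
  also have "(\<integral>\<^sup>+s. g s \<partial>lborel) = ennreal (1/(1-a))"
    unfolding g_def by (rule nn_integral_powr_01[OF assms])
  also have "ennreal (1/(1-a)) + ennreal (1/(1-a)) = ennreal (2/(1-a))"
    using assms by (simp del: ennreal_plus add: ennreal_plus[symmetric])
  finally show ?thesis .
qed

lemma nn_integral_abs_diff_powr_le:
  fixes a u :: real assumes a: "0 < a" "a < 1" and u: "0 \<le> u" "u \<le> 1"
  shows "(\<integral>\<^sup>+v. ennreal (indicator {0..1} v * \<bar>u - v\<bar> powr (-a)) \<partial>lborel) \<le> ennreal (2/(1-a))"
proof -
  define f where "f = (\<lambda>v::real. ennreal (indicator {0..1} v * \<bar>u - v\<bar> powr (-a)))"
  have fm: "f \<in> borel_measurable borel" unfolding f_def by measurable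
  have "(\<integral>\<^sup>+v. f v \<partial>lborel) = (\<integral>\<^sup>+s. f (u + (-1) * s) \<partial>lborel)"
    using nn_integral_real_affine[OF fm, of "-1" u] by simp
  also have "\<dots> \<le> (\<integral>\<^sup>+s. ennreal (indicator {-1..1} s * \<bar>s\<bar> powr (-a)) \<partial>lborel)"
    unfolding f_def using u by (intro nn_integral_mono ennreal_leI) (auto simp: indicator_def)
  also have "\<dots> \<le> ennreal (2/(1-a))"
    by (rule nn_integral_abs_powr_le[OF a])
  finally show ?thesis unfolding f_def by simp
qed

lemma integrable_abs_diff_powr:
  fixes a u :: real assumes a: "0 < a" "a < 1" and u: "0 \<le> u" "u \<le> 1"
  shows "integrable lborel (\<lambda>v. indicator {0..1} v * \<bar>u - v\<bar> powr (-a))"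
  using nn_integral_abs_diff_powr_le[OF a u]
  by (intro integrableI_nonneg) (auto simp: le_less_trans ennreal_less_top)

lemma integral_abs_diff_powr_le:
  fixes a u :: real assumes a: "0 < a" "a < 1" and u: "0 \<le> u" "u \<le> 1"
  shows "(\<integral>v. indicator {0..1} v * \<bar>u - v\<bar> powr (-a) \<partial>lborel) \<le> 2/(1-a)"
proof -
  have "ennreal (\<integral>v. indicator {0..1} v * \<bar>u - v\<bar> powr (-a) \<partial>lborel)
      = (\<integral>\<^sup>+v. ennreal (indicator {0..1} v * \<bar>u - v\<bar> powr (-a)) \<partial>lborel)"
    by (rule nn_integral_eq_integral[symmetric]) (use integrable_abs_diff_powr[OF a u] in auto)
  also have "\<dots> \<le> ennreal (2/(1-a))"
    by (rule nn_integral_abs_diff_powr_le[OF a u])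
  finally show ?thesis
    using a(2) by (subst (asm) ennreal_le_iff) auto
qed

lemma nn_integral_weakly_singular_triple_finite:
  fixes F :: "real \<Rightarrow> real \<Rightarrow> real \<Rightarrow> 'b::real_normed_vector" and a K :: real
  assumes a: "0 < a" "a < 1" and K: "0 \<le> K"
    and bnd: "\<And>u v. u \<noteq> v \<Longrightarrow> (\<integral>\<^sup>+y. ennreal (norm (F y u v)) \<partial>lborel) \<le> ennreal (K * indicator {0..1} u * indicator {0..1} v * \<bar>u - v\<bar> powr (-a))"
  shows "(\<integral>\<^sup>+u. (\<integral>\<^sup>+v. (\<integral>\<^sup>+y. ennreal (norm (F y u v)) \<partial>lborel) \<partial>lborel) \<partial>lborel) < \<infinity>"
proof -
  have "(\<integral>\<^sup>+u. (\<integral>\<^sup>+v. (\<integral>\<^sup>+y. ennreal (norm (F y u v)) \<partial>lborel) \<partial>lborel) \<partial>lborel)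
     \<le> (\<integral>\<^sup>+u. ennreal (K * indicator {0..1} u * (2/(1-a))) \<partial>(lborel::real measure))"
  proof (intro nn_integral_mono)
    fix u :: real
    have "(\<integral>\<^sup>+v. (\<integral>\<^sup>+y. ennreal (norm (F y u v)) \<partial>lborel) \<partial>lborel)
        \<le> (\<integral>\<^sup>+v. ennreal (K * indicator {0..1} u) * ennreal (indicator {0..1} v * \<bar>u - v\<bar> powr (-a)) \<partial>lborel)"
    proof (rule nn_integral_mono_AE)
      show "AE v in lborel. (\<integral>\<^sup>+y. ennreal (norm (F y u v)) \<partial>lborel) \<le> ennreal (K * indicator {0..1} u) * ennreal (indicator {0..1} v * \<bar>u - v\<bar> powr (-a))"
        using AE_lborel_singleton[of u]
      proof eventually_elim
        case (elim v)
        hence "u \<noteq> v" by simp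
        from bnd[OF this] show ?case using K
          by (simp add: ennreal_mult'[symmetric] mult.assoc)
      qed
    qed
    also have "\<dots> = ennreal (K * indicator {0..1} u) * (\<integral>\<^sup>+v. ennreal (indicator {0..1} v * \<bar>u - v\<bar> powr (-a)) \<partial>lborel)"
      by (rule nn_integral_cmult) measurable
    also have "\<dots> \<le> ennreal (K * indicator {0..1} u) * ennreal (2/(1-a))"
    proof (cases "u \<in> {0..1}")
      case True
      thus ?thesis using nn_integral_abs_diff_powr_le[OF a, of u] by (intro mult_left_mono) auto
    qed simp
    also have "\<dots> = ennreal (K * indicator {0..1} u * (2/(1-a)))"
      using K a(2) by (simp add: ennreal_mult'[symmetric])
    finally show "(\<integral>\<^sup>+v. (\<integral>\<^sup>+y. ennreal (norm (F y u v)) \<partial>lborel) \<partial>lborel) \<le> ennreal (K * indicator {0..1} u * (2/(1-a)))" .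
  qed
  also have "\<dots> = (\<integral>\<^sup>+u. ennreal (K * (2/(1-a))) * indicator {0..1} u \<partial>(lborel::real measure))"
    by (intro nn_integral_cong) (auto simp: indicator_def)
  also have "\<dots> = ennreal (K * (2/(1-a))) * emeasure lborel {0..1::real}"
    by (rule nn_integral_cmult_indicator) simp
  also have "\<dots> < \<infinity>" by (simp add: ennreal_mult_less_top)
  finally show ?thesis .
qed

lemma integrable_weakly_singular_tripleI:
  fixes F :: "real \<Rightarrow> real \<Rightarrow> real \<Rightarrow> 'b::{banach,second_countable_topology}" and a K :: real
  assumes a: "0 < a" "a < 1" and K: "0 \<le> K"
    and m: "(\<lambda>(y,(u,v)). F y u v) \<in> borel_measurable (lborel \<Otimes>\<^sub>M (lborel \<Otimes>\<^sub>M lborel))"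
    and bnd: "\<And>u v. u \<noteq> v \<Longrightarrow> (\<integral>\<^sup>+y. ennreal (norm (F y u v)) \<partial>lborel)
        \<le> ennreal (K * indicator {0..1} u * indicator {0..1} v * \<bar>u - v\<bar> powr (-a))"
  shows "integrable (lborel \<Otimes>\<^sub>M (lborel \<Otimes>\<^sub>M lborel)) (\<lambda>(y,(u,v)). F y u v)"
  by (rule integrable_lborel_tripleI[OF m nn_integral_weakly_singular_triple_finite[OF a K bnd]])

lemma fou_kernel_eq_lborel:
  assumes "0 \<le> x" "0 \<le> y"
  shows "fou_kernel a b x y = (\<integral>u. indicator {0..x} u * (\<integral>v. indicator {0..y} v
           * (exp (b * (x - u)) * exp (b * (y - v)) * c_alpha a * \<bar>u - v\<bar> powr - a) \<partial>lborel) \<partial>lborel)"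
proof -
  have inner: "(LBINT v=0..y. exp (b * (x - u)) * exp (b * (y - v)) * c_alpha a * \<bar>u - v\<bar> powr - a)
      = (\<integral>v. indicator {0..y} v * (exp (b * (x - u)) * exp (b * (y - v)) * c_alpha a * \<bar>u - v\<bar> powr - a) \<partial>lborel)" for u
    using assms interval_integral_Icc[of 0 y "\<lambda>v. exp (b * (x - u)) * exp (b * (y - v)) * c_alpha a * \<bar>u - v\<bar> powr - a"]
    by (simp add: set_lebesgue_integral_def zero_ereal_def)
  show ?thesis
    unfolding fou_kernel_def inner
    using assms interval_integral_Icc[of 0 x "\<lambda>u. (\<integral>v. indicator {0..y} v * (exp (b * (x - u)) * exp (b * (y - v)) * c_alpha a * \<bar>u - v\<bar> powr - a) \<partial>lborel)"]
    by (simp add: set_lebesgue_integral_def zero_ereal_def)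
qed

lemma nn_integral_Gamma_scaled:
  fixes a s :: real assumes a: "0 < a" and s: "0 < s"
  shows "(\<integral>\<^sup>+t. ennreal (indicator {0<..} t * t powr (a - 1) * exp (- (t * s))) \<partial>lborel) = ennreal (Gamma a * s powr (- a))"
proof -
  define f where "f = (\<lambda>t::real. ennreal (indicator {0..} t * t powr (a - 1) / exp t))"
  have fm: "f \<in> borel_measurable borel" unfolding f_def by measurable
  have "ennreal (Gamma a) = (\<integral>\<^sup>+t. f t \<partial>lborel)"
    unfolding f_def using Gamma_conv_nn_integral_real[OF a] by simp
  also have "\<dots> = ennreal s * (\<integral>\<^sup>+t. f (0 + s * t) \<partial>lborel)"
    using nn_integral_real_affine[OF fm, of s 0] s by simp
  also have "(\<integral>\<^sup>+t. f (0 + s * t) \<partial>lborel) = (\<integral>\<^sup>+t. ennreal (s powr (a - 1)) * ennreal (indicator {0<..} t * t powr (a - 1) * exp (- (t * s))) \<partial>lborel)"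
  proof (intro nn_integral_cong)
    fix t :: real
    show "f (0 + s * t) = ennreal (s powr (a - 1)) * ennreal (indicator {0<..} t * t powr (a - 1) * exp (- (t * s)))"
    proof (cases "t > 0")
      case True
      hence "(s * t) powr (a - 1) = s powr (a - 1) * t powr (a - 1)" using s by (simp add: powr_mult)
      thus ?thesis using True s unfolding f_def
        by (simp add: ennreal_mult'[symmetric] exp_minus field_simps mult.commute)
    next
      case False
      thus ?thesis using s unfolding f_def by (auto simp: indicator_def zero_le_mult_iff)
    qed
  qed
  also have "\<dots> = ennreal (s powr (a - 1)) * (\<integral>\<^sup>+t. ennreal (indicator {0<..} t * t powr (a - 1) * exp (- (t * s))) \<partial>lborel)"
    by (rule nn_integral_cmult) measurable
  finally have eq: "ennreal (Gamma a) = ennreal s * (ennreal (s powr (a - 1)) * (\<integral>\<^sup>+t. ennreal (indicator {0<..} t * t powr (a - 1) * exp (- (t * s))) \<partial>lborel))" .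
  have "ennreal s * ennreal (s powr (a - 1)) = ennreal (s powr a)"
    using s by (simp add: ennreal_mult'[symmetric] powr_mult_base)
  hence eq2: "ennreal (Gamma a) = ennreal (s powr a) * (\<integral>\<^sup>+t. ennreal (indicator {0<..} t * t powr (a - 1) * exp (- (t * s))) \<partial>lborel)"
    using eq by (simp add: mult.assoc[symmetric])
  have "ennreal (s powr (-a)) * ennreal (Gamma a) = (\<integral>\<^sup>+t. ennreal (indicator {0<..} t * t powr (a - 1) * exp (- (t * s))) \<partial>lborel)"
    unfolding eq2 mult.assoc[symmetric] using s
    by (simp add: ennreal_mult'[symmetric] powr_add[symmetric])
  thus ?thesis using s a Gamma_real_pos[OF a]
    by (simp add: ennreal_mult'[symmetric] mult.commute)
qed

lemma powr_exp_Gamma: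
  fixes a s :: real assumes a: "0 < a" and s: "0 < s"
  shows "integrable lborel (\<lambda>t. indicator {0<..} t * t powr (a - 1) * exp (- (t * s)))"
    and "(\<integral>t. indicator {0<..} t * t powr (a - 1) * exp (- (t * s)) \<partial>lborel) = Gamma a * s powr (- a)"
proof -
  have nn: "(\<integral>\<^sup>+t. ennreal (indicator {0<..} t * t powr (a - 1) * exp (- (t * s))) \<partial>lborel) = ennreal (Gamma a * s powr (- a))"
    by (rule nn_integral_Gamma_scaled[OF a s])
  show I: "integrable lborel (\<lambda>t. indicator {0<..} t * t powr (a - 1) * exp (- (t * s)))"
    by (rule integrableI_nonneg) (auto simp: nn)
  have "ennreal (\<integral>t. indicator {0<..} t * t powr (a - 1) * exp (- (t * s)) \<partial>lborel) = ennreal (Gamma a * s powr (- a))"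
    using nn_integral_eq_integral[OF I] nn by simp
  thus "(\<integral>t. indicator {0<..} t * t powr (a - 1) * exp (- (t * s)) \<partial>lborel) = Gamma a * s powr (- a)"
    using Gamma_real_pos[OF a] by (subst (asm) ennreal_inj) (auto intro!: integral_nonneg_AE)
qed

section \<open>Exponential integrals\<close>

lemma exp_mult_le_exp_abs:
  fixes b s :: real assumes s: "0 \<le> s" "s \<le> 1"
  shows "exp (b * s) \<le> exp \<bar>b\<bar>"
proof -
  have "b * s \<le> \<bar>b\<bar> * s" using s by (intro mult_right_mono) auto
  also have "\<dots> \<le> \<bar>b\<bar> * 1" using s by (intro mult_left_mono) auto
  finally show ?thesis by simp
qed

lemma norm_cexp_mult_le: "0 \<le> x \<Longrightarrow> x \<le> 1 \<Longrightarrow> norm (exp (- w * complex_of_real x)) \<le> exp \<bar>Re w\<bar>"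
  using exp_mult_le_exp_abs[of x "- Re w"] by simp

lemma has_vector_derivative_cexp_div:
  fixes w :: complex assumes "w \<noteq> 0"
  shows "((\<lambda>x::real. exp (w * complex_of_real x) / w) has_vector_derivative exp (w * complex_of_real x)) (at x within S)"
proof -
  have "((\<lambda>x::real. complex_of_real x) has_vector_derivative 1) (at x within S)"
    by (rule has_vector_derivative_of_real[where f="\<lambda>x. x" and D=1, simplified])
  have d: "((\<lambda>y. exp (w * y) / w) has_field_derivative exp (w * complex_of_real x)) (at (complex_of_real x) within of_real ` S)"
    by (rule derivative_eq_intros refl | use assms in simp)+
  show ?thesis
    using field_vector_diff_chain_within[OF \<open>((\<lambda>x::real. complex_of_real x) has_vector_derivative 1) (at x within S)\<close> d]
    by (simp add: o_def)
qed

lemma integral_indicator_cexp: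
  fixes w :: complex assumes "w \<noteq> 0" "p \<le> q"
  shows "(\<integral>x. indicator {p..q} x *\<^sub>R exp (w * complex_of_real x) \<partial>lborel) = (exp (w * q) - exp (w * p)) / w"
proof -
  have "(\<integral>x. indicator {p..q} x *\<^sub>R exp (w * complex_of_real x) \<partial>lborel) = (LBINT x:{p..q}. exp (w * complex_of_real x))"
    by (simp add: set_lebesgue_integral_def)
  also have "\<dots> = (LBINT x=p..q. exp (w * complex_of_real x))"
    using assms by (simp add: interval_integral_Icc)
  also have "\<dots> = exp (w * q) / w - exp (w * p) / w"
    by (rule interval_integral_FTC_finite[where F="\<lambda>x. exp (w * complex_of_real x) / w"])
       (auto intro!: continuous_intros has_vector_derivative_cexp_div assms)
  finally show ?thesis by (simp add: diff_divide_distrib)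
qed

lemma integral_exp_shift_right:
  fixes \<beta> u :: real and w :: complex
  assumes "u \<le> 1" "complex_of_real \<beta> - w \<noteq> 0"
  shows "(\<integral>x. indicator {u..1} x *\<^sub>R (exp (\<beta> * (x - u)) *\<^sub>R exp (- w * complex_of_real x)) \<partial>lborel)
       = (exp (- w) * exp (\<beta> * (1 - u)) - exp (- w * u)) / (complex_of_real \<beta> - w)"
proof -
  have "(\<integral>x. indicator {u..1} x *\<^sub>R (exp (\<beta> * (x - u)) *\<^sub>R exp (- w * complex_of_real x)) \<partial>lborel)
      = (\<integral>x. exp (- \<beta> * u) *\<^sub>R (indicator {u..1} x *\<^sub>R exp ((\<beta> - w) * complex_of_real x)) \<partial>lborel)"
    by (intro Bochner_Integration.integral_cong refl)
       (simp add: scaleR_conv_of_real exp_of_real[symmetric] exp_add[symmetric] algebra_simps)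
  also have "\<dots> = exp (- \<beta> * u) *\<^sub>R ((exp ((\<beta> - w) * 1) - exp ((\<beta> - w) * u)) / (\<beta> - w))"
    using assms by (subst integral_scaleR_right, subst integral_indicator_cexp) auto
  finally show ?thesis
    using assms by (simp add: scaleR_conv_of_real exp_of_real[symmetric] exp_add[symmetric] algebra_simps diff_divide_distrib)
qed

lemma integral_exp_shift_left:
  fixes \<beta> y :: real and w :: complex
  assumes "0 \<le> y" "w + complex_of_real \<beta> \<noteq> 0"
  shows "(\<integral>x. indicator {0..y} x *\<^sub>R (exp (\<beta> * (y - x)) *\<^sub>R exp (- w * complex_of_real x)) \<partial>lborel)
       = (exp (\<beta> * y) - exp (- w * y)) / (w + complex_of_real \<beta>)"
proof -
  have "(\<integral>x. indicator {0..y} x *\<^sub>R (exp (\<beta> * (y - x)) *\<^sub>R exp (- w * complex_of_real x)) \<partial>lborel)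
      = (\<integral>x. exp (\<beta> * y) *\<^sub>R (indicator {0..y} x *\<^sub>R exp (- (w + \<beta>) * complex_of_real x)) \<partial>lborel)"
    by (intro Bochner_Integration.integral_cong refl)
       (simp add: scaleR_conv_of_real exp_of_real[symmetric] exp_add[symmetric] algebra_simps)
  also have "\<dots> = exp (\<beta> * y) *\<^sub>R ((exp (- (w + \<beta>) * y) - exp (- (w + \<beta>) * 0)) / (- (w + \<beta>)))"
    using assms by (subst integral_scaleR_right, subst integral_indicator_cexp) (auto simp: minus_equation_iff[of w])
  also have "\<dots> = (exp (\<beta> * y) - exp (\<beta> * y) * exp (- (w + \<beta>) * y)) / (w + \<beta>)"
  proof -
    have alg: "P * ((E - 1) / (- s)) = (P - P * E) / s" if "s \<noteq> 0" for P E s :: complex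
      using that by (simp add: field_simps)
    show ?thesis by (simp only: scaleR_conv_of_real mult_zero_right exp_zero alg[OF assms(2)])
  qed
  also have "exp (\<beta> * y) * exp (- (w + \<beta>) * y) = exp (- w * y)"
    by (simp add: exp_of_real[symmetric] exp_add[symmetric] algebra_simps)
  finally show ?thesis .
qed

lemma integral_exp_abs_diff_cexp:
  fixes t v :: real and z :: complex
  assumes tz: "complex_of_real t - z \<noteq> 0" "complex_of_real t + z \<noteq> 0" and v: "0 \<le> v" "v \<le> 1"
  shows "(\<integral>u. complex_of_real (indicator {0..1} u * exp (- (t * \<bar>u - v\<bar>))) * exp (- z * complex_of_real u) \<partial>lborel)
    = (exp (- z * v) - complex_of_real (exp (- (t * v)))) / (complex_of_real t - z)
    + (exp (- z * v) - exp (- z) * complex_of_real (exp (- (t * (1 - v))))) / (complex_of_real t + z)"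
proof -
  define L where "L u = indicator {0..v} u *\<^sub>R (exp (- t * (v - u)) *\<^sub>R exp (- z * complex_of_real u))" for u
  define R where "R u = indicator {v..1} u *\<^sub>R (exp (- t * (u - v)) *\<^sub>R exp (- z * complex_of_real u))" for u
  have IL: "integrable lborel L"
    unfolding L_def by (intro borel_integrable_compact) (auto intro!: continuous_intros)
  have IR: "integrable lborel R"
    unfolding R_def by (intro borel_integrable_compact) (auto intro!: continuous_intros)
  have "(\<integral>u. complex_of_real (indicator {0..1} u * exp (- (t * \<bar>u - v\<bar>))) * exp (- z * complex_of_real u) \<partial>lborel)
      = (\<integral>u. L u + R u \<partial>lborel)"
  proof (rule integral_cong_AE)
    show "(\<lambda>u. L u + R u) \<in> borel_measurable lborel" using IL IR by auto
    show "AE u in lborel. complex_of_real (indicator {0..1} u * exp (- (t * \<bar>u - v\<bar>))) * exp (- z * complex_of_real u)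
        = L u + R u"
      using AE_lborel_singleton[of v]
      by eventually_elim (use v in \<open>auto simp: L_def R_def indicator_def scaleR_conv_of_real abs_if algebra_simps\<close>)
  qed measurable
  also have "\<dots> = (\<integral>u. L u \<partial>lborel) + (\<integral>u. R u \<partial>lborel)" using IL IR by simp
  also have "(\<integral>u. L u \<partial>lborel) = (exp (- t * v) - exp (- z * v)) / (z + complex_of_real (- t))"
    unfolding L_def by (rule integral_exp_shift_left) (use v tz in auto)
  also have "(\<integral>u. R u \<partial>lborel) = (exp (- z) * exp (- t * (1 - v)) - exp (- z * v)) / (complex_of_real (- t) - z)"
    unfolding R_def by (rule integral_exp_shift_right) (use v tz in \<open>auto simp: add.commute\<close>)
  moreover have "- complex_of_real t \<noteq> z" using tz(2) by (auto simp: add_eq_0_iff)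
  ultimately show ?thesis
    using tz by (simp add: divide_simps) (simp add: algebra_simps)
qed

section \<open>Stieltjes transforms\<close>

text \<open>A lower bound for |t - w| / max 1 t over all real t, when w is not real.\<close>
definition "stieltjes_margin (w::complex) = min \<bar>Im w\<bar> (min (1/2) (\<bar>Im w\<bar> / (2 * cmod w)))"

lemma stieltjes_margin_pos: "Im w \<noteq> 0 \<Longrightarrow> 0 < stieltjes_margin w"
proof -
  assume "Im w \<noteq> 0"
  hence "w \<noteq> 0" by auto
  thus "0 < stieltjes_margin w" using \<open>Im w \<noteq> 0\<close> by (simp add: stieltjes_margin_def)
qed

lemma stieltjes_margin_le_norm: "stieltjes_margin w \<le> cmod (complex_of_real t - w)"
proof -
  have "\<bar>Im w\<bar> = \<bar>Im (complex_of_real t - w)\<bar>" by simp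
  also have "\<dots> \<le> cmod (complex_of_real t - w)" by (rule abs_Im_le_cmod)
  finally show ?thesis unfolding stieltjes_margin_def by linarith
qed

lemma stieltjes_margin_mult_le_norm:
  assumes w: "Im w \<noteq> 0" and t: "1 \<le> t"
  shows "stieltjes_margin w * t \<le> cmod (complex_of_real t - w)"
proof (cases "2 * cmod w \<le> t")
  case True
  have "t - cmod w \<le> cmod (complex_of_real t - w)"
    using norm_triangle_ineq2[of "complex_of_real t" w] t by simp
  moreover have "stieltjes_margin w \<le> 1/2" by (simp add: stieltjes_margin_def)
  ultimately have "stieltjes_margin w * t \<le> (1/2) * t" using t by (intro mult_right_mono) auto
  thus ?thesis using True \<open>t - cmod w \<le> _\<close> by linarith
next
  case False
  have wpos: "0 < cmod w" using w by auto
  have "stieltjes_margin w * t \<le> (\<bar>Im w\<bar> / (2 * cmod w)) * t" using t by (intro mult_right_mono) (auto simp: stieltjes_margin_def)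
  also have "\<dots> \<le> \<bar>Im w\<bar>"
  proof -
    have "\<bar>Im w\<bar> * t \<le> \<bar>Im w\<bar> * (2 * cmod w)" using False by (intro mult_left_mono) auto
    thus ?thesis using wpos by (simp add: field_simps)
  qed
  also have "\<dots> \<le> cmod (complex_of_real t - w)" using stieltjes_margin_le_norm[of w t] abs_Im_le_cmod[of "complex_of_real t - w"] by simp
  finally show ?thesis .
qed

definition "powr_majorant a t = indicator {0..1} t * t powr (a - 1) + indicator {1..} t * t powr (a - 2)"

lemma powr_majorant_int:
  fixes a :: real assumes a: "0 < a" "a < 1"
  shows "integrable lborel (powr_majorant a)"
proof -
  have h1: "((\<lambda>t. t powr (a - 1)) has_integral (1 powr (a - 1 + 1) / (a - 1 + 1))) {0..1}"
    by (rule has_integral_powr_from_0) (use a in auto)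
  have nn1: "(\<integral>\<^sup>+t. ennreal (indicator {0..1} t * t powr (a - 1)) \<partial>lborel) = ennreal (1 powr (a - 1 + 1) / (a - 1 + 1))"
    using nn_integral_has_integral_lebesgue[OF _ h1] by simp
  have I1: "integrable lborel (\<lambda>t. indicator {0..1} t * t powr (a - 1))"
    by (rule integrableI_nonneg) (auto simp: nn1)
  have h2: "((\<lambda>t. t powr (a - 2)) has_integral (- (1 powr (a - 2 + 1)) / (a - 2 + 1))) {1..}"
    by (rule has_integral_powr_to_inf) (use a in auto)
  have nn2: "(\<integral>\<^sup>+t. ennreal (indicator {1..} t * t powr (a - 2)) \<partial>lborel) = ennreal (- (1 powr (a - 2 + 1)) / (a - 2 + 1))"
    using nn_integral_has_integral_lebesgue[OF _ h2] by simp
  have I2: "integrable lborel (\<lambda>t. indicator {1..} t * t powr (a - 2))"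
    by (rule integrableI_nonneg) (auto simp: nn2)
  show ?thesis unfolding powr_majorant_def[abs_def] using I1 I2 by simp
qed

lemma stieltjes_partial_fractions:
  fixes z :: complex and a t :: real
  assumes "Im z \<noteq> 0" "0 < t"
  shows "complex_of_real (2 * t powr a) / (complex_of_real t ^ 2 - z ^ 2)
       = complex_of_real (t powr (a - 1)) * 1 / (complex_of_real t - z) + complex_of_real (t powr (a - 1)) * 1 / (complex_of_real t - - z)"
proof -
  have "complex_of_real t - z \<noteq> 0" "complex_of_real t + z \<noteq> 0"
    using assms(1) by (auto simp: complex_eq_iff)
  moreover have "complex_of_real (2 * t powr a) = complex_of_real (t powr (a - 1)) * (2 * complex_of_real t)"
    using assms(2) by (simp add: powr_diff)
  moreover have "complex_of_real t ^ 2 - z ^ 2 = (complex_of_real t - z) * (complex_of_real t + z)"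
    by (simp add: power2_eq_square algebra_simps)
  ultimately show ?thesis by (simp add: field_simps)
qed

lemma powr_div_norm_le_majorant:
  fixes a t :: real
  assumes w: "Im w \<noteq> 0" and t: "0 < t"
  shows "t powr (a - 1) / cmod (complex_of_real t - w) \<le> powr_majorant a t / stieltjes_margin w"
proof -
  have d: "0 < stieltjes_margin w" by (rule stieltjes_margin_pos[OF w])
  have den: "0 < cmod (complex_of_real t - w)" using stieltjes_margin_le_norm[of w t] d by linarith
  show ?thesis
  proof (cases "t \<le> 1")
    case True
    have "t powr (a - 1) / cmod (complex_of_real t - w) \<le> t powr (a - 1) / stieltjes_margin w"
      using stieltjes_margin_le_norm[of w t] d den by (intro divide_left_mono) auto
    also have "\<dots> \<le> powr_majorant a t / stieltjes_margin w"
      using True t d by (intro divide_right_mono) (auto simp: powr_majorant_def indicator_def)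
    finally show ?thesis .
  next
    case False
    hence t1: "1 \<le> t" by simp
    have "t powr (a - 1) / cmod (complex_of_real t - w) \<le> t powr (a - 1) / (stieltjes_margin w * t)"
      using stieltjes_margin_mult_le_norm[OF w t1] d t1 den by (intro divide_left_mono) auto
    also have "\<dots> = t powr (a - 2) / stieltjes_margin w"
      using t1 by (simp add: powr_diff power2_eq_square)
    also have "\<dots> \<le> powr_majorant a t / stieltjes_margin w"
      using t1 d by (intro divide_right_mono) (auto simp: powr_majorant_def indicator_def)
    finally show ?thesis .
  qed
qed

lemma integrable_stieltjes:
  fixes k :: "real \<Rightarrow> complex" and a :: real
  assumes a: "0 < a" "a < 1" and w: "Im w \<noteq> 0" and km: "k \<in> borel_measurable borel"
    and kb: "\<And>t. 0 < t \<Longrightarrow> norm (k t) \<le> M"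
  shows "integrable lborel (\<lambda>t. complex_of_real (indicator {0<..} t * t powr (a - 1)) * k t / (complex_of_real t - w))"
proof (rule Bochner_Integration.integrable_bound[where f="\<lambda>t. M * (powr_majorant a t / stieltjes_margin w)"])
  show "integrable lborel (\<lambda>t. M * (powr_majorant a t / stieltjes_margin w))"
    using powr_majorant_int[OF a] by simp
  show "(\<lambda>t. complex_of_real (indicator {0<..} t * t powr (a - 1)) * k t / (complex_of_real t - w)) \<in> borel_measurable lborel"
    using km by measurable
  have M0: "0 \<le> M" using order_trans[OF norm_ge_zero kb[of 1]] by simp
  have "norm (complex_of_real (indicator {0<..} t * t powr (a - 1)) * k t / (complex_of_real t - w))
      \<le> M * (powr_majorant a t / stieltjes_margin w)" for t
  proof (cases "0 < t")
    case True
    have "norm (complex_of_real (indicator {0<..} t * t powr (a - 1)) * k t / (complex_of_real t - w))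
        = norm (k t) * (t powr (a - 1) / cmod (complex_of_real t - w))"
      using True by (simp add: norm_mult norm_divide)
    also have "\<dots> \<le> M * (powr_majorant a t / stieltjes_margin w)"
      using kb[OF True] powr_div_norm_le_majorant[OF w True, of a] M0 by (intro mult_mono) auto
    finally show ?thesis .
  qed (use M0 stieltjes_margin_pos[OF w] in \<open>simp add: powr_majorant_def\<close>)
  thus "AE t in lborel. norm (complex_of_real (indicator {0<..} t * t powr (a - 1)) * k t / (complex_of_real t - w))
      \<le> norm (M * (powr_majorant a t / stieltjes_margin w))"
    by (intro AE_I2) (rule order_trans, assumption, simp add: abs_of_pos[OF stieltjes_margin_pos[OF w]] abs_of_nonneg M0 powr_majorant_def)
qed

section \<open>Consequences of the eigenvalue equation\<close>

lemma laplace_identity_algebra: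
  fixes phi_z phi_mb psi_z z b Gam lam E phi1 c I J0 J1 L \<kappa> P0 P1 :: complex
  assumes c: "c \<noteq> 0" and L: "L \<noteq> 0"
    and psi: "phi_z = phi_mb - (z + b) * psi_z"
    and g_hat: "Gam * ((z - b) * lam * phi_z + E * (lam * phi1)) = c * (psi_z * I - J0 - E * J1)"
    and \<kappa>: "\<kappa> = Gam * lam / c"
    and L_def: "L = \<kappa> * (z ^ 2 - b ^ 2) + I"
    and P0: "P0 = - \<kappa> * (b - z) * phi_mb + J0"
    and P1: "P1 = - \<kappa> * (- phi1) + J1"
  shows "phi_z = phi_mb - (z + b) / L * (P0 + E * P1)"
proof -
  have "\<kappa> * ((z - b) * phi_z + E * phi1) = psi_z * I - J0 - E * J1"
    using g_hat c unfolding \<kappa> by (simp add: field_simps)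
  hence "psi_z * L = P0 + E * P1"
    unfolding L_def P0 P1 psi by (simp add: algebra_simps power2_eq_square)
  hence "psi_z = (P0 + E * P1) / L" using L by (simp add: field_simps)
  thus ?thesis using psi by simp
qed

locale fou_eigenpair =
  fixes a b lam :: real and \<phi> :: "real \<Rightarrow> real"
  assumes a0: "0 < a" and a1: "a < 1" and lam: "0 < lam"
    and meas: "set_borel_measurable lborel {0..1} \<phi>"
    and L2: "set_integrable lborel {0..1} (\<lambda>x. (\<phi> x)\<^sup>2)"
    and eigen: "\<forall>x\<in>{0..1}. (LBINT y=0..1. fou_kernel a b x y * \<phi> y) = lam * \<phi> x"
begin

definition "c = c_alpha a"

lemma c_pos: "0 < c"
  using a0 a1 by (simp add: c_def c_alpha_def)

definition "phi_ext x = indicator {0..1} x * \<phi> x"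

lemma phi_ext_meas[measurable]: "phi_ext \<in> borel_measurable borel"
  using meas unfolding set_borel_measurable_def phi_ext_def by simp

lemma integrable_phi_ext: "integrable lborel phi_ext"
proof -
  have A: "integrable lborel (\<lambda>x. indicator {0..1} x *\<^sub>R (\<phi> x)\<^sup>2)"
    using L2 by (simp add: set_integrable_def)
  have B: "integrable lborel (\<lambda>x. indicator {0..1::real} x :: real)"
    by (rule integrable_real_indicator) auto
  have I: "integrable lborel (\<lambda>x. indicator {0..1::real} x + indicator {0..1} x *\<^sub>R (\<phi> x)\<^sup>2)"
    using Bochner_Integration.integrable_add[OF B A] .
  have AE: "AE x in lborel. norm (phi_ext x) \<le> norm (indicator {0..1::real} x + indicator {0..1} x *\<^sub>R (\<phi> x)\<^sup>2)"
  proof (intro AE_I2)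
    fix x :: real
    have "\<bar>\<phi> x\<bar> \<le> 1 + (\<phi> x)\<^sup>2"
    proof (cases "\<bar>\<phi> x\<bar> \<le> 1")
      case False
      hence "\<bar>\<phi> x\<bar> * 1 \<le> \<bar>\<phi> x\<bar> * \<bar>\<phi> x\<bar>" by (intro mult_left_mono) auto
      thus ?thesis by (simp add: power2_eq_square)
    qed (use zero_le_power2[of "\<phi> x"] in linarith)
    thus "norm (phi_ext x) \<le> norm (indicator {0..1::real} x + indicator {0..1} x *\<^sub>R (\<phi> x)\<^sup>2)"
      by (auto simp: phi_ext_def indicator_def)
  qed
  show ?thesis by (rule Bochner_Integration.integrable_bound[OF I _ AE]) simp
qed

definition "phi_L1 = (\<integral>x. \<bar>phi_ext x\<bar> \<partial>lborel)"

lemma phi_L1_nonneg: "0 \<le> phi_L1" unfolding phi_L1_def by simp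

lemma nn_integral_phi_ext: "(\<integral>\<^sup>+x. ennreal \<bar>phi_ext x\<bar> \<partial>lborel) = ennreal phi_L1"
  unfolding phi_L1_def by (rule nn_integral_eq_integral) (use integrable_phi_ext in auto)

definition "psi_ext v = indicator {0..1} v * psi b \<phi> v"

lemma psi_ext_repr:
  "psi_ext v = (\<integral>y. indicator {0..1} v * (if v \<le> y then 1 else 0) * exp (b * (y - v)) * phi_ext y \<partial>lborel)"
proof (cases "v \<in> {0..1}")
  case True
  have "psi b \<phi> v = exp (- b * v) * (LBINT r=v..1. exp (b * r) * \<phi> r)" by (simp add: psi_def)
  also have "(LBINT r=v..1. exp (b * r) * \<phi> r) = (\<integral>r. indicator {v..1} r * (exp (b * r) * \<phi> r) \<partial>lborel)"
    using True interval_integral_Icc[of v 1 "\<lambda>r. exp (b * r) * \<phi> r"] by (simp add: set_lebesgue_integral_def one_ereal_def)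
  also have "exp (- b * v) * \<dots> = (\<integral>r. exp (- b * v) * (indicator {v..1} r * (exp (b * r) * \<phi> r)) \<partial>lborel)"
    by simp
  also have "\<dots> = (\<integral>y. indicator {0..1} v * (if v \<le> y then 1 else 0) * exp (b * (y - v)) * phi_ext y \<partial>lborel)"
  proof (rule Bochner_Integration.integral_cong[OF refl])
    fix r
    show "exp (- b * v) * (indicator {v..1} r * (exp (b * r) * \<phi> r)) = indicator {0..1} v * (if v \<le> r then 1 else 0) * exp (b * (r - v)) * phi_ext r"
      using True by (cases "v \<le> r \<and> r \<le> 1") (auto simp: indicator_def phi_ext_def exp_diff exp_minus field_simps)
  qed
  finally show ?thesis using True by (simp add: psi_ext_def)
qed (simp add: psi_ext_def)

lemma psi_ext_meas[measurable]: "psi_ext \<in> borel_measurable borel"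
proof -
  have eq: "psi_ext = (\<lambda>v. \<integral>y. indicator {0..1} v * (if v \<le> y then 1 else 0) * exp (b * (y - v)) * phi_ext y \<partial>lborel)"
    by (rule ext, rule psi_ext_repr)
  have "(\<lambda>v. \<integral>y. indicator {0..1} v * (if v \<le> y then 1 else 0) * exp (b * (y - v)) * phi_ext y \<partial>lborel) \<in> borel_measurable borel"
    by (rule lborel.borel_measurable_lebesgue_integral, rule borel_measurable_borel_lborelI, measurable)
  thus ?thesis unfolding eq .
qed

definition "psi_sup = exp \<bar>b\<bar> * phi_L1"

lemma psi_sup_nonneg: "0 \<le> psi_sup"
  using phi_L1_nonneg by (simp add: psi_sup_def)

lemma psi_ext_bound: "\<bar>psi_ext v\<bar> \<le> psi_sup * indicator {0..1} v"
proof (cases "v \<in> {0..1}")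
  case True
  let ?f = "\<lambda>y. indicator {0..1} v * (if v \<le> y then 1 else 0) * exp (b * (y - v)) * phi_ext y"
  have bnd: "norm (?f y) \<le> exp \<bar>b\<bar> * \<bar>phi_ext y\<bar>" for y
  proof (cases "v \<le> y \<and> y \<le> 1")
    case True
    hence "exp (b * (y - v)) \<le> exp \<bar>b\<bar>" using \<open>v \<in> {0..1}\<close> by (intro exp_mult_le_exp_abs) auto
    thus ?thesis using \<open>v \<in> {0..1}\<close> by (auto simp: abs_mult intro!: mult_right_mono)
  qed (auto simp: phi_ext_def indicator_def)
  have I: "integrable lborel (\<lambda>y. exp \<bar>b\<bar> * \<bar>phi_ext y\<bar>)" using integrable_phi_ext by auto
  have "\<bar>psi_ext v\<bar> \<le> (\<integral>y. norm (?f y) \<partial>lborel)"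
    unfolding psi_ext_repr using integral_norm_bound[of lborel ?f] by simp
  also have "\<dots> \<le> (\<integral>y. exp \<bar>b\<bar> * \<bar>phi_ext y\<bar> \<partial>lborel)"
    by (rule integral_mono[OF _ I bnd]) (rule Bochner_Integration.integrable_bound[OF I], use bnd in auto)
  finally show ?thesis using True by (simp add: phi_L1_def psi_sup_def)
qed (simp add: psi_ext_def)

definition "g u = c * (\<integral>v. \<bar>u - v\<bar> powr (-a) * psi_ext v \<partial>lborel)"

lemma g_meas[measurable]: "g \<in> borel_measurable borel"
proof -
  have "(\<lambda>u. \<integral>v. \<bar>u - v\<bar> powr (-a) * psi_ext v \<partial>lborel) \<in> borel_measurable borel"
    by (rule lborel.borel_measurable_lebesgue_integral, rule borel_measurable_borel_lborelI, measurable)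
  thus ?thesis unfolding g_def by measurable
qed

definition "eigen_integrand x y u v =
  indicator {0..x} u * (if 0 \<le> v \<and> v \<le> y then 1 else 0)
  * (exp (b * (x - u)) * exp (b * (y - v)) * c * \<bar>u - v\<bar> powr (-a)) * phi_ext y"

lemma eigen_integrand_integrable:
  assumes x: "0 \<le> x" "x \<le> 1"
  shows "integrable (lborel \<Otimes>\<^sub>M (lborel \<Otimes>\<^sub>M lborel)) (\<lambda>(y,(u,v)). eigen_integrand x y u v)"
proof (rule integrable_weakly_singular_tripleI[OF a0 a1])
  define C where "C = exp \<bar>b\<bar> * exp \<bar>b\<bar> * c"
  have C: "0 \<le> C" using c_pos by (simp add: C_def)
  show "(\<lambda>(y,(u,v)). eigen_integrand x y u v) \<in> borel_measurable (lborel \<Otimes>\<^sub>M (lborel \<Otimes>\<^sub>M lborel))"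
    unfolding eigen_integrand_def by (rule borel_measurable_lborel_tripleI) measurable
  show "0 \<le> C * phi_L1" using C phi_L1_nonneg by simp
  fix u v :: real
  have bnd: "norm (eigen_integrand x y u v)
      \<le> C * indicator {0..1} u * indicator {0..1} v * \<bar>u - v\<bar> powr (-a) * \<bar>phi_ext y\<bar>" for y
  proof (cases "u \<in> {0..x} \<and> 0 \<le> v \<and> v \<le> y \<and> y \<in> {0..1}")
    case True
    have "exp (b * (x - u)) \<le> exp \<bar>b\<bar>" "exp (b * (y - v)) \<le> exp \<bar>b\<bar>"
      using True x by (intro exp_mult_le_exp_abs; auto)+
    hence "exp (b * (x - u)) * exp (b * (y - v)) * c * \<bar>u - v\<bar> powr (-a) * \<bar>phi_ext y\<bar>
        \<le> C * \<bar>u - v\<bar> powr (-a) * \<bar>phi_ext y\<bar>"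
      using c_pos by (auto simp: C_def intro!: mult_right_mono mult_mono)
    thus ?thesis using True x c_pos by (simp add: eigen_integrand_def abs_mult indicator_def)
  qed (use C in \<open>auto simp: eigen_integrand_def phi_ext_def indicator_def\<close>)
  have "(\<integral>\<^sup>+y. ennreal (norm (eigen_integrand x y u v)) \<partial>lborel)
      \<le> (\<integral>\<^sup>+y. ennreal (C * indicator {0..1} u * indicator {0..1} v * \<bar>u - v\<bar> powr (-a)) * ennreal \<bar>phi_ext y\<bar> \<partial>lborel)"
    using bnd C by (intro nn_integral_mono) (auto simp: ennreal_mult'[symmetric] intro!: ennreal_leI)
  also have "\<dots> = ennreal (C * indicator {0..1} u * indicator {0..1} v * \<bar>u - v\<bar> powr (-a)) * ennreal phi_L1"
    by (subst nn_integral_cmult) (simp_all add: nn_integral_phi_ext)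
  also have "\<dots> = ennreal (C * phi_L1 * indicator {0..1} u * indicator {0..1} v * \<bar>u - v\<bar> powr (-a))"
    using C phi_L1_nonneg by (simp add: ennreal_mult'[symmetric] mult_ac)
  finally show "(\<integral>\<^sup>+y. ennreal (norm (eigen_integrand x y u v)) \<partial>lborel)
      \<le> ennreal (C * phi_L1 * indicator {0..1} u * indicator {0..1} v * \<bar>u - v\<bar> powr (-a))" .
qed

lemma lam_phi_eq_triple_integral:
  assumes x: "0 \<le> x" "x \<le> 1"
  shows "lam * \<phi> x = (\<integral>y. (\<integral>u. (\<integral>v. eigen_integrand x y u v \<partial>lborel) \<partial>lborel) \<partial>lborel)"
proof -
  have "lam * \<phi> x = (LBINT y=0..1. fou_kernel a b x y * \<phi> y)" using eigen x by simp
  also have "\<dots> = (\<integral>y. indicator {0..1} y * (fou_kernel a b x y * \<phi> y) \<partial>lborel)"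
    using interval_integral_Icc[of 0 1 "\<lambda>y. fou_kernel a b x y * \<phi> y"]
    by (simp add: set_lebesgue_integral_def one_ereal_def zero_ereal_def)
  also have "\<dots> = (\<integral>y. (\<integral>u. (\<integral>v. eigen_integrand x y u v \<partial>lborel) \<partial>lborel) \<partial>lborel)"
  proof (rule Bochner_Integration.integral_cong[OF refl])
    fix y :: real
    show "indicator {0..1} y * (fou_kernel a b x y * \<phi> y) = (\<integral>u. (\<integral>v. eigen_integrand x y u v \<partial>lborel) \<partial>lborel)"
    proof (cases "y \<in> {0..1}")
      case True
      have "indicator {0..1} y * (fou_kernel a b x y * \<phi> y) = fou_kernel a b x y * phi_ext y"
        by (simp add: phi_ext_def)
      also have "\<dots> = (\<integral>u. (\<integral>v. indicator {0..x} u * (indicator {0..y} v * (exp (b * (x - u)) * exp (b * (y - v)) * c_alpha a * \<bar>u - v\<bar> powr - a)) * phi_ext y \<partial>lborel) \<partial>lborel)"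
        using True by (subst fou_kernel_eq_lborel[OF x(1)]) (auto simp: mult_ac simp flip: integral_mult_left_zero integral_mult_right_zero)
      also have "\<dots> = (\<integral>u. (\<integral>v. eigen_integrand x y u v \<partial>lborel) \<partial>lborel)"
        by (intro Bochner_Integration.integral_cong refl) (simp add: eigen_integrand_def indicator_def c_def mult_ac)
      finally show ?thesis .
    qed (simp add: eigen_integrand_def phi_ext_def)
  qed
  finally show ?thesis .
qed

lemma integral_eigen_integrand_y:
  "(\<integral>y. eigen_integrand x y u v \<partial>lborel) = indicator {0..x} u * exp (b * (x - u)) * c * (\<bar>u - v\<bar> powr (-a) * psi_ext v)"
proof -
  have "(\<integral>y. eigen_integrand x y u v \<partial>lborel) = (\<integral>y. (indicator {0..x} u * exp (b * (x - u)) * c * \<bar>u - v\<bar> powr (-a))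
      * (indicator {0..1} v * (if v \<le> y then 1 else 0) * exp (b * (y - v)) * phi_ext y) \<partial>lborel)"
    by (intro Bochner_Integration.integral_cong refl) (auto simp: eigen_integrand_def indicator_def phi_ext_def)
  thus ?thesis unfolding psi_ext_repr by simp
qed

lemma lam_phi_eq_convolution:
  assumes x: "0 \<le> x" "x \<le> 1"
  shows "lam * \<phi> x = (\<integral>u. indicator {0..x} u * exp (b * (x - u)) * g u \<partial>lborel)"
  unfolding lam_phi_eq_triple_integral[OF x] lborel_Fubini_integral_triple[OF eigen_integrand_integrable[OF x]]
    integral_eigen_integrand_y
  by (simp add: g_def mult.assoc)

definition "g_sup = c * psi_sup * (2/(1-a))"

lemma g_sup_nonneg: "0 \<le> g_sup"
  using c_pos psi_sup_nonneg a1 by (simp add: g_sup_def)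

lemma g_bound:
  assumes u: "0 \<le> u" "u \<le> 1"
  shows "\<bar>g u\<bar> \<le> g_sup"
proof -
  have I: "integrable lborel (\<lambda>v. psi_sup * (indicator {0..1} v * \<bar>u - v\<bar> powr (-a)))"
    using integrable_abs_diff_powr[OF a0 a1 u] by simp
  have bnd: "norm (\<bar>u - v\<bar> powr (-a) * psi_ext v) \<le> psi_sup * (indicator {0..1} v * \<bar>u - v\<bar> powr (-a))" for v
    using mult_left_mono[OF psi_ext_bound[of v], of "\<bar>u - v\<bar> powr (-a)"] by (simp add: abs_mult mult_ac)
  have "\<bar>\<integral>v. \<bar>u - v\<bar> powr (-a) * psi_ext v \<partial>lborel\<bar> \<le> (\<integral>v. norm (\<bar>u - v\<bar> powr (-a) * psi_ext v) \<partial>lborel)"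
    using integral_norm_bound[of lborel "\<lambda>v. \<bar>u - v\<bar> powr (-a) * psi_ext v"] by simp
  also have "\<dots> \<le> (\<integral>v. psi_sup * (indicator {0..1} v * \<bar>u - v\<bar> powr (-a)) \<partial>lborel)"
  proof (rule integral_mono[OF _ I bnd])
    have "integrable lborel (\<lambda>v. \<bar>u - v\<bar> powr (-a) * psi_ext v)"
      by (rule Bochner_Integration.integrable_bound[OF I]) (simp, intro AE_I2, rule order_trans[OF bnd], simp)
    thus "integrable lborel (\<lambda>v. norm (\<bar>u - v\<bar> powr (-a) * psi_ext v))" by auto
  qed
  also have "\<dots> \<le> psi_sup * (2/(1-a))"
    using mult_left_mono[OF integral_abs_diff_powr_le[OF a0 a1 u] psi_sup_nonneg] by simp
  finally have "\<bar>\<integral>v. \<bar>u - v\<bar> powr (-a) * psi_ext v \<partial>lborel\<bar> \<le> psi_sup * (2/(1-a))" .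
  from mult_left_mono[OF this, of c] c_pos show ?thesis
    by (simp add: g_def g_sup_def abs_mult mult.assoc)
qed

lemma integrable_indicator_mult_g: "integrable lborel (\<lambda>u. indicator {0..1} u *\<^sub>R (k u * g u))"
  if "k \<in> borel_measurable borel" "\<And>u. u \<in> {0..1} \<Longrightarrow> \<bar>k u\<bar> \<le> K" for k :: "real \<Rightarrow> real" and K
proof (rule integrableI_bounded_set_indicator[where B="K * g_sup"])
  show "(\<lambda>u. k u * g u) \<in> borel_measurable lborel" using that(1) by measurable
  show "AE x in lborel. x \<in> {0..1} \<longrightarrow> norm (k x * g x) \<le> K * g_sup"
  proof -
    have K0: "0 \<le> K" using order_trans[OF abs_ge_zero that(2)[of 0]] by simp
    show ?thesis
      using that(2) g_bound g_sup_nonneg K0 by (intro AE_I2 impI) (auto simp: abs_mult intro!: mult_mono)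
  qed
qed auto

lemma set_integrable_exp_g: "set_integrable lborel {0..1} (\<lambda>u. exp (- b * u) * g u)"
  unfolding set_integrable_def
  by (rule integrable_indicator_mult_g[where K="exp \<bar>b\<bar>"]) (use exp_mult_le_exp_abs[of _ "- b"] in auto)

lemma lam_phi_eq_integral:
  assumes x: "0 \<le> x" "x \<le> 1"
  shows "lam * \<phi> x = exp (b * x) * integral {0..x} (\<lambda>u. exp (- b * u) * g u)"
proof -
  have S: "set_integrable lborel {0..x} (\<lambda>u. exp (- b * u) * g u)"
    by (rule set_integrable_subset[OF set_integrable_exp_g]) (use x in auto)
  have "lam * \<phi> x = (\<integral>u. indicator {0..x} u * exp (b * (x - u)) * g u \<partial>lborel)"
    by (rule lam_phi_eq_convolution[OF x])
  also have "\<dots> = exp (b * x) * (LINT u:{0..x}|lborel. exp (- b * u) * g u)"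
    by (simp add: set_lebesgue_integral_def exp_diff exp_minus field_simps flip: integral_mult_right_zero)
  also have "(LINT u:{0..x}|lborel. exp (- b * u) * g u) = integral {0..x} (\<lambda>u. exp (- b * u) * g u)"
    by (rule set_borel_integral_eq_integral(2)[OF S])
  finally show ?thesis .
qed

lemma continuous_on_phi: "continuous_on {0..1} \<phi>"
proof -
  have "(\<lambda>u. exp (- b * u) * g u) integrable_on {0..1}"
    by (rule set_borel_integral_eq_integral(1)[OF set_integrable_exp_g])
  hence "continuous_on {0..1} (\<lambda>x. exp (b * x) * integral {0..x} (\<lambda>u. exp (- b * u) * g u) / lam)"
    by (intro continuous_intros indefinite_integral_continuous_1) (use lam in auto)
  moreover have "exp (b * x) * integral {0..x} (\<lambda>u. exp (- b * u) * g u) / lam = \<phi> x" if "x \<in> {0..1}" for x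
    using lam_phi_eq_integral[of x] that lam by (simp add: field_simps)
  ultimately show ?thesis by (rule continuous_on_eq)
qed

lemma psi_eq_integral:
  assumes x: "0 \<le> x" "x \<le> 1"
  shows "psi b \<phi> x = exp (- b * x) * integral {x..1} (\<lambda>r. exp (b * r) * \<phi> r)"
proof -
  have c: "continuous_on {x..1} (\<lambda>r. exp (b * r) * \<phi> r)"
    by (intro continuous_intros continuous_on_subset[OF continuous_on_phi]) (use x in auto)
  have "(LBINT r=x..1. exp (b * r) * \<phi> r) = integral {x..1} (\<lambda>r. exp (b * r) * \<phi> r)"
    using interval_integral_eq_integral[OF x(2) borel_integrable_atLeastAtMost'[OF c]]
    by (simp add: one_ereal_def)
  thus ?thesis by (simp add: psi_def)
qed

lemma psi_deriv_at_1: "vector_derivative (psi b \<phi>) (at 1 within {0..1}) = - \<phi> 1"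
proof -
  define f where "f r = exp (b * r) * \<phi> r" for r
  have c: "continuous_on {0..1} f" unfolding f_def by (intro continuous_intros continuous_on_phi)
  have d1: "((\<lambda>x. integral {x..1} f) has_real_derivative - f 1) (at 1 within {0..1})"
    by (rule integral_has_real_derivative'[OF c]) auto
  have d2: "((\<lambda>x. exp (- b * x)) has_real_derivative (- b * exp (- b * 1))) (at 1 within {0..1})"
    by (auto intro!: derivative_eq_intros)
  have d: "((\<lambda>x. exp (- b * x) * integral {x..1} f) has_real_derivative
      (exp (- b * 1) * (- f 1) + (- b * exp (- b * 1)) * integral {1..1} f)) (at 1 within {0..1})"
    using DERIV_mult[OF d2 d1] by (simp add: mult_ac)
  have val: "exp (- b * 1) * (- f 1) + (- b * exp (- b * 1)) * integral {1..1} f = - \<phi> 1"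
    by (simp add: f_def exp_minus field_simps)
  have d': "(psi b \<phi> has_real_derivative - \<phi> 1) (at 1 within {0..1})"
  proof (rule has_field_derivative_transform_within[OF d[unfolded val] zero_less_one])
    show "1 \<in> {0..1::real}" by simp
    fix x :: real assume "x \<in> {0..1}" "dist x 1 < 1"
    thus "exp (- b * x) * integral {x..1} f = psi b \<phi> x"
      using psi_eq_integral[of x] by (simp add: f_def[abs_def])
  qed
  hence "(psi b \<phi> has_vector_derivative - \<phi> 1) (at 1 within cbox 0 1)"
    by (simp add: has_real_derivative_iff_has_vector_derivative)
  hence "vector_derivative (psi b \<phi>) (at 1 within cbox 0 1) = - \<phi> 1"
    by (rule vector_derivative_within_cbox[rotated 2]) auto
  thus ?thesis by simp
qed

lemma integrable_phi_ext_mult: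
  fixes k :: "real \<Rightarrow> complex"
  assumes "k \<in> borel_measurable borel" and "\<And>y. y \<in> {0..1} \<Longrightarrow> norm (k y) \<le> K"
  shows "integrable lborel (\<lambda>y. complex_of_real (phi_ext y) * k y)"
  by (rule integrable_of_real_mult_bounded[OF integrable_phi_ext _ assms]) (simp add: phi_ext_def)

lemma laplace01_eq_lborel: "laplace01 \<phi> w = (\<integral>x. complex_of_real (phi_ext x) * exp (- w * complex_of_real x) \<partial>lborel)"
proof -
  have "laplace01 \<phi> w = (LBINT x:{0..1}. exp (- w * complex_of_real x) * complex_of_real (\<phi> x))"
    unfolding laplace01_def
    using interval_integral_Icc[of 0 1 "\<lambda>x. exp (- w * complex_of_real x) * complex_of_real (\<phi> x)"]
    by (simp add: zero_ereal_def one_ereal_def)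
  also have "\<dots> = (\<integral>x. complex_of_real (phi_ext x) * exp (- w * complex_of_real x) \<partial>lborel)"
    unfolding set_lebesgue_integral_def
    by (intro Bochner_Integration.integral_cong refl) (simp add: phi_ext_def indicator_def scaleR_conv_of_real)
  finally show ?thesis .
qed

lemma psi_0_eq_laplace01: "complex_of_real (psi b \<phi> 0) = laplace01 \<phi> (- complex_of_real b)"
proof -
  have "psi b \<phi> 0 = (\<integral>r. phi_ext r * exp (b * r) \<partial>lborel)"
    unfolding psi_def
    using interval_integral_Icc[of 0 1 "\<lambda>r. exp (b * r) * \<phi> r"]
    by (simp add: zero_ereal_def one_ereal_def set_lebesgue_integral_def phi_ext_def mult_ac)
  hence "complex_of_real (psi b \<phi> 0) = (\<integral>r. complex_of_real (phi_ext r) * complex_of_real (exp (b * r)) \<partial>lborel)"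
    by (simp only: integral_complex_of_real[symmetric] of_real_mult)
  also have "\<dots> = laplace01 \<phi> (- complex_of_real b)"
    unfolding laplace01_eq_lborel by (intro Bochner_Integration.integral_cong refl) (simp add: exp_of_real[symmetric])
  finally show ?thesis .
qed

definition "psi_hat w = (\<integral>x. complex_of_real (psi_ext x) * exp (- w * complex_of_real x) \<partial>lborel)"

definition "psi_hat_integrand z x y = complex_of_real (phi_ext y) * (indicator {0..y} x *\<^sub>R (exp (b * (y - x)) *\<^sub>R exp (- z * complex_of_real x)))"

lemma psi_hat_integrand_integrable:
  "integrable (lborel \<Otimes>\<^sub>M lborel) (\<lambda>(x,y). psi_hat_integrand z x y)"
proof -
  have "(\<lambda>(x,y). psi_hat_integrand z x y) = (\<lambda>(x,y). complex_of_real (phi_ext y * (if 0 \<le> x \<and> x \<le> y then 1 else 0)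
      * exp (b * (y - x))) * exp (- z * complex_of_real x))"
    by (auto simp: psi_hat_integrand_def indicator_def scaleR_conv_of_real fun_eq_iff)
  also have "\<dots> \<in> borel_measurable (lborel \<Otimes>\<^sub>M lborel)"
    by (rule borel_measurable_lborel_pairI) measurable
  finally have integrand_meas: "(\<lambda>(x,y). psi_hat_integrand z x y) \<in> borel_measurable (lborel \<Otimes>\<^sub>M lborel)" .
  have integrand_bound: "norm (psi_hat_integrand z x y) \<le> (exp \<bar>b\<bar> * exp \<bar>Re z\<bar>) * indicator {0..1} x * \<bar>phi_ext y\<bar>" for x y
  proof (cases "0 \<le> x \<and> x \<le> y \<and> y \<le> 1")
    case True
    have "exp (b * (y - x)) \<le> exp \<bar>b\<bar>" "norm (exp (- z * complex_of_real x)) \<le> exp \<bar>Re z\<bar>"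
      using True by (intro exp_mult_le_exp_abs norm_cexp_mult_le; auto)+
    hence "\<bar>phi_ext y\<bar> * (exp (b * (y - x)) * norm (exp (- z * complex_of_real x))) \<le> \<bar>phi_ext y\<bar> * (exp \<bar>b\<bar> * exp \<bar>Re z\<bar>)"
      by (intro mult_left_mono mult_mono) auto
    thus ?thesis using True by (simp add: psi_hat_integrand_def norm_mult mult_ac)
  qed (auto simp: psi_hat_integrand_def phi_ext_def indicator_def)
  show ?thesis
    by (rule integrable_lborel_pair_boundedI[OF integrand_meas integrand_bound]) (use integrable_phi_ext in \<open>auto simp: nn_integral_phi_ext\<close>)
qed

lemma psi_hat_eq:
  assumes zb: "z + complex_of_real b \<noteq> 0"
  shows "psi_hat z = (laplace01 \<phi> (- complex_of_real b) - laplace01 \<phi> z) / (z + complex_of_real b)"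
proof -
  have "psi_hat z = (\<integral>x. (\<integral>y. psi_hat_integrand z x y \<partial>lborel) \<partial>lborel)"
    unfolding psi_hat_def
  proof (rule Bochner_Integration.integral_cong[OF refl])
    fix x :: real
    show "complex_of_real (psi_ext x) * exp (- z * complex_of_real x) = (\<integral>y. psi_hat_integrand z x y \<partial>lborel)"
    proof (cases "x \<in> {0..1}")
      case True
      thus ?thesis
        unfolding psi_ext_repr integral_complex_of_real[symmetric] integral_mult_left_zero[symmetric]
        by (intro Bochner_Integration.integral_cong refl) (auto simp: psi_hat_integrand_def phi_ext_def indicator_def scaleR_conv_of_real)
    next
      case False
      hence "psi_hat_integrand z x y = 0" for y by (auto simp: psi_hat_integrand_def phi_ext_def indicator_def)
      thus ?thesis using False by (simp add: psi_ext_def)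
    qed
  qed
  also have "\<dots> = (\<integral>y. (\<integral>x. psi_hat_integrand z x y \<partial>lborel) \<partial>lborel)" by (rule lborel_Fubini_integral[OF psi_hat_integrand_integrable])
  also have "\<dots> = (\<integral>y. complex_of_real (phi_ext y) * ((exp (b * y) - exp (- z * y)) / (z + complex_of_real b)) \<partial>lborel)"
  proof (rule Bochner_Integration.integral_cong[OF refl])
    fix y :: real
    show "(\<integral>x. psi_hat_integrand z x y \<partial>lborel) = complex_of_real (phi_ext y) * ((exp (b * y) - exp (- z * y)) / (z + complex_of_real b))"
    proof (cases "y \<in> {0..1}")
      case True
      show ?thesis unfolding psi_hat_integrand_def integral_mult_right_zero
        by (subst integral_exp_shift_left[OF _ zb]) (use True in auto)
    qed (simp add: psi_hat_integrand_def phi_ext_def)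
  qed
  also have "\<dots> = ((\<integral>y. complex_of_real (phi_ext y) * exp (b * y) \<partial>lborel) - (\<integral>y. complex_of_real (phi_ext y) * exp (- z * y) \<partial>lborel))
      / (z + complex_of_real b)"
  proof -
    have "integrable lborel (\<lambda>y. complex_of_real (phi_ext y) * exp (b * y))"
      by (rule integrable_phi_ext_mult[where K="exp \<bar>b\<bar>"]) (measurable, use exp_mult_le_exp_abs in auto)
    moreover have "integrable lborel (\<lambda>y. complex_of_real (phi_ext y) * exp (- z * y))"
      by (rule integrable_phi_ext_mult[where K="exp \<bar>Re z\<bar>"]) (measurable, use norm_cexp_mult_le in auto)
    ultimately show ?thesis by (simp add: right_diff_distrib)
  qed
  also have "\<dots> = (laplace01 \<phi> (- complex_of_real b) - laplace01 \<phi> z) / (z + complex_of_real b)"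
    by (simp add: laplace01_eq_lborel flip: exp_of_real)
  finally show ?thesis .
qed

lemma integrable_g_mult:
  fixes k :: "real \<Rightarrow> complex"
  assumes "k \<in> borel_measurable borel" and "\<And>y. y \<in> {0..1} \<Longrightarrow> norm (k y) \<le> K"
  shows "integrable lborel (\<lambda>y. complex_of_real (indicator {0..1} y * g y) * k y)"
proof (rule integrable_of_real_mult_bounded[OF _ _ assms])
  show "integrable lborel (\<lambda>y. indicator {0..1} y * g y)"
    using integrable_indicator_mult_g[of "\<lambda>_. 1" 1] by simp
qed simp

definition "g_hat w = (\<integral>u. complex_of_real (indicator {0..1} u * g u) * exp (- w * complex_of_real u) \<partial>lborel)"

definition "convolution_integrand z x u = complex_of_real (indicator {0..1} u * g u)
      * (indicator {u..1} x *\<^sub>R (exp (b * (x - u)) *\<^sub>R exp (- z * complex_of_real x)))"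

lemma convolution_integrand_integrable:
  "integrable (lborel \<Otimes>\<^sub>M lborel) (\<lambda>(x,u). convolution_integrand z x u)"
proof -
  have "(\<lambda>(x,u). convolution_integrand z x u) = (\<lambda>(x,u). complex_of_real (indicator {0..1} u * (if u \<le> x \<and> x \<le> 1 then 1 else 0)
      * g u * exp (b * (x - u))) * exp (- z * complex_of_real x))"
    by (auto simp: convolution_integrand_def indicator_def scaleR_conv_of_real fun_eq_iff)
  also have "\<dots> \<in> borel_measurable (lborel \<Otimes>\<^sub>M lborel)"
    by (rule borel_measurable_lborel_pairI) measurable
  finally have integrand_meas: "(\<lambda>(x,u). convolution_integrand z x u) \<in> borel_measurable (lborel \<Otimes>\<^sub>M lborel)" .
  have integrand_bound: "norm (convolution_integrand z x u) \<le> (exp \<bar>b\<bar> * g_sup * exp \<bar>Re z\<bar>) * indicator {0..1} x * indicator {0..1} u" for x u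
  proof (cases "0 \<le> u \<and> u \<le> x \<and> x \<le> 1")
    case True
    have "exp (b * (x - u)) \<le> exp \<bar>b\<bar>" "norm (exp (- z * complex_of_real x)) \<le> exp \<bar>Re z\<bar>" "\<bar>g u\<bar> \<le> g_sup"
      using True by (intro exp_mult_le_exp_abs norm_cexp_mult_le g_bound; auto)+
    hence "\<bar>g u\<bar> * (exp (b * (x - u)) * norm (exp (- z * complex_of_real x))) \<le> g_sup * (exp \<bar>b\<bar> * exp \<bar>Re z\<bar>)"
      by (intro mult_mono) auto
    thus ?thesis using True by (simp add: convolution_integrand_def norm_mult mult_ac)
  qed (use g_sup_nonneg in \<open>auto simp: convolution_integrand_def indicator_def\<close>)
  show ?thesis
    by (rule integrable_lborel_pair_boundedI[OF integrand_meas integrand_bound]) (use g_sup_nonneg nn_integral_indicator_01_finite in auto)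
qed

lemma lam_laplace01_eq:
  assumes bz: "complex_of_real b - z \<noteq> 0"
  shows "(complex_of_real b - z) * (complex_of_real lam * laplace01 \<phi> z)
       = (\<integral>u. complex_of_real (indicator {0..1} u * g u) * (exp (- z) * exp (b * (1 - u)) - exp (- z * u)) \<partial>lborel)"
proof -
  have "complex_of_real lam * laplace01 \<phi> z = (\<integral>x. (\<integral>u. convolution_integrand z x u \<partial>lborel) \<partial>lborel)"
    unfolding laplace01_eq_lborel integral_mult_right_zero[symmetric]
  proof (rule Bochner_Integration.integral_cong[OF refl])
    fix x :: real
    show "complex_of_real lam * (complex_of_real (phi_ext x) * exp (- z * complex_of_real x)) = (\<integral>u. convolution_integrand z x u \<partial>lborel)"
    proof (cases "x \<in> {0..1}")
      case True
      hence "complex_of_real (lam * phi_ext x) * exp (- z * complex_of_real x)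
          = (\<integral>u. complex_of_real (indicator {0..x} u * exp (b * (x - u)) * g u) * exp (- z * complex_of_real x) \<partial>lborel)"
        using lam_phi_eq_convolution[of x] by (simp add: phi_ext_def flip: integral_complex_of_real integral_mult_left_zero)
      also have "\<dots> = (\<integral>u. convolution_integrand z x u \<partial>lborel)"
        using True by (intro Bochner_Integration.integral_cong refl) (auto simp: convolution_integrand_def indicator_def scaleR_conv_of_real)
      finally show ?thesis by (simp add: mult.assoc)
    next
      case False
      hence "convolution_integrand z x u = 0" for u by (auto simp: convolution_integrand_def indicator_def)
      thus ?thesis using False by (simp add: phi_ext_def)
    qed
  qed
  also have "\<dots> = (\<integral>u. (\<integral>x. convolution_integrand z x u \<partial>lborel) \<partial>lborel)" by (rule lborel_Fubini_integral[OF convolution_integrand_integrable])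
  also have "\<dots> = (\<integral>u. complex_of_real (indicator {0..1} u * g u) * (exp (- z) * exp (b * (1 - u)) - exp (- z * u))
      / (complex_of_real b - z) \<partial>lborel)"
  proof (rule Bochner_Integration.integral_cong[OF refl])
    fix u :: real
    show "(\<integral>x. convolution_integrand z x u \<partial>lborel) = complex_of_real (indicator {0..1} u * g u) * (exp (- z) * exp (b * (1 - u)) - exp (- z * u))
        / (complex_of_real b - z)"
    proof (cases "u \<in> {0..1}")
      case True
      show ?thesis unfolding convolution_integrand_def integral_mult_right_zero
        by (subst integral_exp_shift_right[OF _ bz]) (use True in auto)
    qed (simp add: convolution_integrand_def)
  qed
  finally show ?thesis using bz by simp
qed

lemma g_hat_eq:
  assumes bz: "complex_of_real b - z \<noteq> 0"
  shows "g_hat z = (z - complex_of_real b) * complex_of_real lam * laplace01 \<phi> z + exp (- z) * complex_of_real (lam * \<phi> 1)"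
proof -
  have i1: "integrable lborel (\<lambda>u. complex_of_real (indicator {0..1} u * g u) * exp (- z * complex_of_real u))"
    by (rule integrable_g_mult[where K="exp \<bar>Re z\<bar>"]) (measurable, use norm_cexp_mult_le in auto)
  have i2: "integrable lborel (\<lambda>u. complex_of_real (indicator {0..1} u * g u) * complex_of_real (exp (b * (1 - u))))"
    by (rule integrable_g_mult[where K="exp \<bar>b\<bar>"]) (measurable, use exp_mult_le_exp_abs in auto)
  have lam_phi_1: "(\<integral>u. complex_of_real (indicator {0..1} u * g u) * complex_of_real (exp (b * (1 - u))) \<partial>lborel)
      = complex_of_real (lam * \<phi> 1)"
    using lam_phi_eq_convolution[of 1] by (simp add: mult_ac flip: integral_complex_of_real of_real_mult)
  have "(complex_of_real b - z) * (complex_of_real lam * laplace01 \<phi> z) = exp (- z) * complex_of_real (lam * \<phi> 1) - g_hat z"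
    unfolding lam_laplace01_eq[OF bz] g_hat_def lam_phi_1[symmetric]
    using i1 i2 by (simp add: algebra_simps)
  thus ?thesis by (simp add: algebra_simps)
qed

lemma integrable_psi_ext_mult:
  fixes k :: "real \<Rightarrow> complex"
  assumes "k \<in> borel_measurable borel" and "\<And>y. y \<in> {0..1} \<Longrightarrow> norm (k y) \<le> K"
  shows "integrable lborel (\<lambda>y. complex_of_real (psi_ext y) * k y)"
proof (rule integrable_of_real_mult_bounded[OF _ _ assms])
  show "integrable lborel psi_ext"
    by (rule Bochner_Integration.integrable_bound[where f="\<lambda>v. psi_sup * indicator {0..1} v"])
       (use psi_ext_bound psi_sup_nonneg in auto)
qed (simp add: psi_ext_def)

definition "U0 t = (\<integral>v. psi_ext v * exp (- (t * v)) \<partial>lborel)"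

definition "U1 t = (\<integral>v. psi_ext v * exp (- (t * (1 - v))) \<partial>lborel)"

lemma abs_integral_psi_ext_le:
  assumes kb: "\<And>v. v \<in> {0..1} \<Longrightarrow> \<bar>k v\<bar> \<le> 1" and km: "k \<in> borel_measurable borel"
  shows "\<bar>\<integral>v. psi_ext v * k v \<partial>lborel\<bar> \<le> psi_sup"
proof -
  have I: "integrable lborel (\<lambda>v. psi_sup * indicator {0..1::real} v)" by simp
  have bnd: "norm (psi_ext v * k v) \<le> psi_sup * indicator {0..1} v" for v
  proof (cases "v \<in> {0..1}")
    case True
    have "\<bar>psi_ext v\<bar> * \<bar>k v\<bar> \<le> psi_sup * 1" using psi_ext_bound[of v] kb[OF True] True psi_sup_nonneg by (intro mult_mono) auto
    thus ?thesis using True by (simp add: abs_mult)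
  next
    case False thus ?thesis by (simp add: psi_ext_def)
  qed
  have I2: "integrable lborel (\<lambda>v. psi_ext v * k v)"
    by (rule Bochner_Integration.integrable_bound[OF I]) (use km bnd psi_sup_nonneg in auto)
  have "\<bar>\<integral>v. psi_ext v * k v \<partial>lborel\<bar> \<le> (\<integral>v. norm (psi_ext v * k v) \<partial>lborel)"
    using integral_norm_bound[of lborel "\<lambda>v. psi_ext v * k v"] by simp
  also have "\<dots> \<le> (\<integral>v. psi_sup * indicator {0..1::real} v \<partial>lborel)"
    using integrable_norm[OF I2] I bnd by (intro Bochner_Integration.integral_mono) auto
  also have "\<dots> = psi_sup" by simp
  finally show ?thesis .
qed

lemma U0_bound: "0 < t \<Longrightarrow> \<bar>U0 t\<bar> \<le> psi_sup"
  unfolding U0_def by (rule abs_integral_psi_ext_le) auto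

lemma U1_bound: "0 < t \<Longrightarrow> \<bar>U1 t\<bar> \<le> psi_sup"
  unfolding U1_def by (rule abs_integral_psi_ext_le) auto

lemma U0_meas[measurable]: "U0 \<in> borel_measurable borel"
  unfolding U0_def[abs_def] by (rule lborel.borel_measurable_lebesgue_integral, rule borel_measurable_borel_lborelI, measurable)

lemma U1_meas[measurable]: "U1 \<in> borel_measurable borel"
  unfolding U1_def[abs_def] by (rule lborel.borel_measurable_lebesgue_integral, rule borel_measurable_borel_lborelI, measurable)

lemma ufun_eq_lborel: "ufun b \<phi> x t = (\<integral>y. psi_ext y * exp (- t * \<bar>x - y\<bar>) \<partial>lborel)"
  unfolding ufun_def
  using interval_integral_Icc[of 0 1 "\<lambda>y. psi b \<phi> y * exp (- t * \<bar>x - y\<bar>)"]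
  by (simp add: zero_ereal_def one_ereal_def set_lebesgue_integral_def psi_ext_def mult.assoc)

lemma ufun_0_eq: "ufun b \<phi> 0 t = U0 t"
  unfolding ufun_eq_lborel U0_def
  by (intro Bochner_Integration.integral_cong refl) (auto simp: psi_ext_def indicator_def)

lemma ufun_1_eq: "ufun b \<phi> 1 t = U1 t"
  unfolding ufun_eq_lborel U1_def
  by (intro Bochner_Integration.integral_cong refl) (auto simp: psi_ext_def indicator_def)

definition "exp_abs_diff_integrand z t u v = complex_of_real (indicator {0..1} u * psi_ext v * exp (- (t * \<bar>u - v\<bar>))) * exp (- z * complex_of_real u)"

lemma exp_abs_diff_integrand_integrable:
  assumes t: "0 < t"
  shows "integrable (lborel \<Otimes>\<^sub>M lborel) (\<lambda>(u,v). exp_abs_diff_integrand z t u v)"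
proof -
  have integrand_meas: "(\<lambda>(u,v). exp_abs_diff_integrand z t u v) \<in> borel_measurable (lborel \<Otimes>\<^sub>M lborel)"
    unfolding exp_abs_diff_integrand_def by (rule borel_measurable_lborel_pairI) measurable
  have integrand_bound: "norm (exp_abs_diff_integrand z t u v) \<le> (psi_sup * exp \<bar>Re z\<bar>) * indicator {0..1} u * indicator {0..1} v" for u v
  proof (cases "u \<in> {0..1}")
    case True
    have e2: "norm (exp (- z * complex_of_real u)) \<le> exp \<bar>Re z\<bar>" using True by (intro norm_cexp_mult_le) auto
    have e1: "exp (- (t * \<bar>u - v\<bar>)) \<le> 1" using t by simp
    have "norm (exp_abs_diff_integrand z t u v) = \<bar>psi_ext v\<bar> * exp (- (t * \<bar>u - v\<bar>)) * norm (exp (- z * complex_of_real u))"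
      using True by (simp add: exp_abs_diff_integrand_def norm_mult abs_mult)
    also have "\<dots> \<le> (psi_sup * indicator {0..1} v) * 1 * exp \<bar>Re z\<bar>"
      using e1 e2 psi_ext_bound[of v] psi_sup_nonneg by (intro mult_mono) auto
    finally show ?thesis using True by (simp add: mult_ac)
  next
    case False thus ?thesis using psi_sup_nonneg by (simp add: exp_abs_diff_integrand_def)
  qed
  show ?thesis
    by (rule integrable_lborel_pair_boundedI[OF integrand_meas integrand_bound]) (use psi_sup_nonneg nn_integral_indicator_01_finite in auto)
qed

lemma double_integral_exp_abs_diff:
  assumes t: "0 < t" and tz: "complex_of_real t - z \<noteq> 0" "complex_of_real t + z \<noteq> 0"
  shows "(\<integral>u. (\<integral>v. exp_abs_diff_integrand z t u v \<partial>lborel) \<partial>lborel)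
    = (psi_hat z - complex_of_real (U0 t)) / (complex_of_real t - z) + (psi_hat z - exp (- z) * complex_of_real (U1 t)) / (complex_of_real t + z)"
proof -
  have "(\<integral>u. (\<integral>v. exp_abs_diff_integrand z t u v \<partial>lborel) \<partial>lborel) = (\<integral>v. (\<integral>u. exp_abs_diff_integrand z t u v \<partial>lborel) \<partial>lborel)"
    by (rule lborel_Fubini_integral[OF exp_abs_diff_integrand_integrable[OF t]])
  also have "\<dots> = (\<integral>v. (complex_of_real (psi_ext v) * exp (- z * v) - complex_of_real (psi_ext v * exp (- (t * v)))) / (complex_of_real t - z)
      + (complex_of_real (psi_ext v) * exp (- z * v) - exp (- z) * complex_of_real (psi_ext v * exp (- (t * (1 - v))))) / (complex_of_real t + z) \<partial>lborel)"
  proof (rule Bochner_Integration.integral_cong[OF refl])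
    fix v :: real
    show "(\<integral>u. exp_abs_diff_integrand z t u v \<partial>lborel) = (complex_of_real (psi_ext v) * exp (- z * v) - complex_of_real (psi_ext v * exp (- (t * v)))) / (complex_of_real t - z)
      + (complex_of_real (psi_ext v) * exp (- z * v) - exp (- z) * complex_of_real (psi_ext v * exp (- (t * (1 - v))))) / (complex_of_real t + z)"
    proof (cases "v \<in> {0..1}")
      case True
      have "(\<integral>u. exp_abs_diff_integrand z t u v \<partial>lborel) = complex_of_real (psi_ext v) * (\<integral>u. complex_of_real (indicator {0..1} u * exp (- (t * \<bar>u - v\<bar>))) * exp (- z * complex_of_real u) \<partial>lborel)"
        by (subst integral_mult_right_zero[symmetric], intro Bochner_Integration.integral_cong refl) (simp add: exp_abs_diff_integrand_def mult_ac)
      also have "\<dots> = complex_of_real (psi_ext v) * ((exp (- z * v) - complex_of_real (exp (- (t * v)))) / (complex_of_real t - z)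
          + (exp (- z * v) - exp (- z) * complex_of_real (exp (- (t * (1 - v))))) / (complex_of_real t + z))"
        using True by (subst integral_exp_abs_diff_cexp[OF tz]) auto
      also have "\<dots> = (complex_of_real (psi_ext v) * exp (- z * v) - complex_of_real (psi_ext v * exp (- (t * v)))) / (complex_of_real t - z)
      + (complex_of_real (psi_ext v) * exp (- z * v) - exp (- z) * complex_of_real (psi_ext v * exp (- (t * (1 - v))))) / (complex_of_real t + z)"
        by (simp add: algebra_simps add_divide_distrib diff_divide_distrib)
      finally show ?thesis .
    next
      case False thus ?thesis by (simp add: exp_abs_diff_integrand_def psi_ext_def)
    qed
  qed
  also have "\<dots> = (psi_hat z - complex_of_real (U0 t)) / (complex_of_real t - z) + (psi_hat z - exp (- z) * complex_of_real (U1 t)) / (complex_of_real t + z)"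
  proof -
    have i1: "integrable lborel (\<lambda>v. complex_of_real (psi_ext v) * exp (- z * v))"
      by (rule integrable_psi_ext_mult[where K="exp \<bar>Re z\<bar>"]) (measurable, use norm_cexp_mult_le in auto)
    have i2: "integrable lborel (\<lambda>v. complex_of_real (psi_ext v) * complex_of_real (exp (- (t * v))))"
      by (rule integrable_psi_ext_mult[where K=1]) (measurable, use t in auto)
    have i3: "integrable lborel (\<lambda>v. complex_of_real (psi_ext v) * complex_of_real (exp (- (t * (1 - v)))))"
      by (rule integrable_psi_ext_mult[where K=1]) (measurable, use t in auto)
    have U0c: "complex_of_real (U0 t) = (\<integral>v. complex_of_real (psi_ext v) * complex_of_real (exp (- (t * v))) \<partial>lborel)"
      by (simp only: U0_def integral_complex_of_real[symmetric] of_real_mult)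
    have U1c: "complex_of_real (U1 t) = (\<integral>v. complex_of_real (psi_ext v) * complex_of_real (exp (- (t * (1 - v)))) \<partial>lborel)"
      by (simp only: U1_def integral_complex_of_real[symmetric] of_real_mult)
    show ?thesis unfolding U0c U1c psi_hat_def of_real_mult
      using i1 i2 i3 by (simp add: integral_divide_zero)
  qed
  finally show ?thesis .
qed

definition "gamma_kernel u v = (\<integral>t. indicator {0<..} t * t powr (a - 1) * exp (- (t * \<bar>u - v\<bar>)) \<partial>lborel)"

lemma gamma_kernel_eq: "u \<noteq> v \<Longrightarrow> gamma_kernel u v = Gamma a * \<bar>u - v\<bar> powr (- a)"
  unfolding gamma_kernel_def by (rule powr_exp_Gamma(2)[OF a0]) simp

lemma Gamma_mult_g: "Gamma a * g u = c * (\<integral>v. gamma_kernel u v * psi_ext v \<partial>lborel)"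
proof -
  have "Gamma a * g u = c * (\<integral>v. Gamma a * \<bar>u - v\<bar> powr (- a) * psi_ext v \<partial>lborel)"
    by (simp add: g_def mult_ac)
  also have "(\<integral>v. Gamma a * \<bar>u - v\<bar> powr (- a) * psi_ext v \<partial>lborel) = (\<integral>v. gamma_kernel u v * psi_ext v \<partial>lborel)"
  proof (rule integral_cong_AE)
    show "(\<lambda>v. Gamma a * \<bar>u - v\<bar> powr (- a) * psi_ext v) \<in> borel_measurable lborel" by measurable
    have "(\<lambda>v. gamma_kernel u v) \<in> borel_measurable borel"
      unfolding gamma_kernel_def by (rule lborel.borel_measurable_lebesgue_integral, rule borel_measurable_borel_lborelI, measurable)
    thus "(\<lambda>v. gamma_kernel u v * psi_ext v) \<in> borel_measurable lborel" by measurable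
    show "AE v in lborel. Gamma a * \<bar>u - v\<bar> powr (- a) * psi_ext v = gamma_kernel u v * psi_ext v"
      using AE_lborel_singleton[of u] by eventually_elim (simp add: gamma_kernel_eq)
  qed
  finally show ?thesis .
qed

definition "laplace_integrand z t u v = complex_of_real (indicator {0..1} u * psi_ext v
    * (indicator {0<..} t * t powr (a - 1) * exp (- (t * \<bar>u - v\<bar>)))) * exp (- z * complex_of_real u)"

lemma laplace_integrand_integrable:
  "integrable (lborel \<Otimes>\<^sub>M (lborel \<Otimes>\<^sub>M lborel)) (\<lambda>(t,(u,v)). laplace_integrand z t u v)"
proof (rule integrable_weakly_singular_tripleI[OF a0 a1])
  define K where "K = psi_sup * exp \<bar>Re z\<bar> * Gamma a"
  show "0 \<le> K" using psi_sup_nonneg Gamma_real_pos[OF a0] by (simp add: K_def)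
  show "(\<lambda>(t,(u,v)). laplace_integrand z t u v) \<in> borel_measurable (lborel \<Otimes>\<^sub>M (lborel \<Otimes>\<^sub>M lborel))"
    unfolding laplace_integrand_def by (rule borel_measurable_lborel_tripleI) measurable
  fix u v :: real assume uv: "u \<noteq> v"
  define C where "C = \<bar>psi_ext v\<bar> * indicator {0..1} u * norm (exp (- z * complex_of_real u))"
  have C: "0 \<le> C" "C \<le> psi_sup * exp \<bar>Re z\<bar> * indicator {0..1} u * indicator {0..1} v"
  proof -
    show "0 \<le> C" by (simp add: C_def)
    have "norm (exp (- z * complex_of_real u)) \<le> exp \<bar>Re z\<bar>" if "u \<in> {0..1}"
      using that by (intro norm_cexp_mult_le) auto
    thus "C \<le> psi_sup * exp \<bar>Re z\<bar> * indicator {0..1} u * indicator {0..1} v"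
      unfolding C_def using psi_ext_bound[of v] psi_sup_nonneg
      by (cases "u \<in> {0..1}"; cases "v \<in> {0..1}") (auto simp: psi_ext_def mult_ac intro!: mult_mono)
  qed
  have "(\<integral>\<^sup>+t. ennreal (norm (laplace_integrand z t u v)) \<partial>lborel)
      = (\<integral>\<^sup>+t. ennreal C * ennreal (indicator {0<..} t * t powr (a - 1) * exp (- (t * \<bar>u - v\<bar>))) \<partial>lborel)"
    by (intro nn_integral_cong)
       (simp add: laplace_integrand_def C_def norm_mult abs_mult ennreal_mult'[symmetric] indicator_def mult_ac)
  also have "\<dots> = ennreal C * ennreal (Gamma a * \<bar>u - v\<bar> powr (- a))"
    using uv by (subst nn_integral_cmult) (simp_all add: nn_integral_Gamma_scaled[OF a0])
  also have "\<dots> \<le> ennreal (K * indicator {0..1} u * indicator {0..1} v * \<bar>u - v\<bar> powr (- a))"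
    using mult_right_mono[OF C(2), of "Gamma a * \<bar>u - v\<bar> powr (- a)"] Gamma_real_pos[OF a0] C(1)
    by (simp add: ennreal_mult'[symmetric] K_def mult_ac ennreal_leI)
  finally show "(\<integral>\<^sup>+t. ennreal (norm (laplace_integrand z t u v)) \<partial>lborel)
      \<le> ennreal (K * indicator {0..1} u * indicator {0..1} v * \<bar>u - v\<bar> powr (- a))" .
qed

lemma Gamma_g_hat_eq_triple_integral:
  "complex_of_real (Gamma a) * g_hat z
     = complex_of_real c * (\<integral>u. (\<integral>v. (\<integral>t. laplace_integrand z t u v \<partial>lborel) \<partial>lborel) \<partial>lborel)"
proof -
  have "complex_of_real (Gamma a) * (complex_of_real (indicator {0..1} u * g u) * exp (- z * complex_of_real u))
      = complex_of_real c * (\<integral>v. (\<integral>t. laplace_integrand z t u v \<partial>lborel) \<partial>lborel)" for u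
  proof -
    have "(\<integral>t. laplace_integrand z t u v \<partial>lborel)
        = complex_of_real (indicator {0..1} u * (gamma_kernel u v * psi_ext v)) * exp (- z * complex_of_real u)" for v
      by (simp add: laplace_integrand_def gamma_kernel_def mult_ac
               flip: integral_complex_of_real integral_mult_left_zero integral_mult_right_zero)
    hence "(\<integral>v. (\<integral>t. laplace_integrand z t u v \<partial>lborel) \<partial>lborel)
        = complex_of_real (indicator {0..1} u * (\<integral>v. gamma_kernel u v * psi_ext v \<partial>lborel)) * exp (- z * complex_of_real u)"
      by (simp flip: integral_complex_of_real integral_mult_left_zero integral_mult_right_zero)
    thus ?thesis
      using arg_cong[OF Gamma_mult_g[of u], of "\<lambda>r. complex_of_real (indicator {0..1} u * r)"]
      by (simp add: mult_ac)
  qed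
  thus ?thesis by (simp add: g_hat_def flip: integral_mult_right_zero)
qed

lemma Gamma_g_hat_eq:
  assumes tz: "\<And>t. 0 < t \<Longrightarrow> complex_of_real t - z \<noteq> 0" "\<And>t. 0 < t \<Longrightarrow> complex_of_real t + z \<noteq> 0"
  shows "complex_of_real (Gamma a) * g_hat z = complex_of_real c * (\<integral>t. complex_of_real (indicator {0<..} t * t powr (a - 1))
     * ((psi_hat z - complex_of_real (U0 t)) / (complex_of_real t - z) + (psi_hat z - exp (- z) * complex_of_real (U1 t)) / (complex_of_real t + z)) \<partial>lborel)"
  unfolding Gamma_g_hat_eq_triple_integral lborel_Fubini_integral_triple[OF laplace_integrand_integrable, symmetric]
proof (intro arg_cong[where f="\<lambda>r. complex_of_real c * r"] Bochner_Integration.integral_cong refl)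
  fix t :: real
  show "(\<integral>u. (\<integral>v. laplace_integrand z t u v \<partial>lborel) \<partial>lborel) = complex_of_real (indicator {0<..} t * t powr (a - 1))
     * ((psi_hat z - complex_of_real (U0 t)) / (complex_of_real t - z) + (psi_hat z - exp (- z) * complex_of_real (U1 t)) / (complex_of_real t + z))"
  proof (cases "0 < t")
    case True
    have "(\<integral>u. (\<integral>v. laplace_integrand z t u v \<partial>lborel) \<partial>lborel)
        = complex_of_real (t powr (a - 1)) * (\<integral>u. (\<integral>v. exp_abs_diff_integrand z t u v \<partial>lborel) \<partial>lborel)"
      using True by (simp add: laplace_integrand_def exp_abs_diff_integrand_def mult_ac flip: integral_mult_right_zero)
    thus ?thesis using double_integral_exp_abs_diff[OF True tz(1)[OF True] tz(2)[OF True]] True by simp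
  qed (simp add: laplace_integrand_def)
qed

lemma stieltjes_split:
  assumes z: "Im z \<noteq> 0"
  shows "(\<integral>t. complex_of_real (indicator {0<..} t * t powr (a - 1))
     * ((psi_hat z - complex_of_real (U0 t)) / (complex_of_real t - z) + (psi_hat z - exp (- z) * complex_of_real (U1 t)) / (complex_of_real t + z)) \<partial>lborel)
    = psi_hat z * (LBINT t:{0<..}. complex_of_real (2 * t powr a) / (complex_of_real t ^ 2 - z ^ 2))
      - (LBINT t:{0<..}. complex_of_real (t powr (a - 1) * ufun b \<phi> 0 t) / (complex_of_real t - z))
      - exp (- z) * (LBINT t:{0<..}. complex_of_real (t powr (a - 1) * ufun b \<phi> 1 t) / (complex_of_real t - - z))"
proof -
  have mz: "Im (- z) \<noteq> 0" using z by simp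
  define T where "T t = complex_of_real (indicator {0<..} t * t powr (a - 1))" for t :: real
  let ?P = "\<lambda>t. T t * 1 / (complex_of_real t - z) + T t * 1 / (complex_of_real t - - z)"
  let ?B = "\<lambda>t. T t * complex_of_real (U0 t) / (complex_of_real t - z)"
  let ?R = "\<lambda>t. T t * complex_of_real (U1 t) / (complex_of_real t - - z)"
  have "integrable lborel (\<lambda>t. T t * 1 / (complex_of_real t - z))"
    unfolding T_def by (rule integrable_stieltjes[OF a0 a1 z, where M=1]) auto
  moreover have "integrable lborel (\<lambda>t. T t * 1 / (complex_of_real t - - z))"
    unfolding T_def by (rule integrable_stieltjes[OF a0 a1 mz, where M=1]) auto
  ultimately have iP: "integrable lborel (\<lambda>t. psi_hat z * ?P t)" by auto
  have iB: "integrable lborel ?B"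
    unfolding T_def by (rule integrable_stieltjes[OF a0 a1 z, where M=psi_sup]) (use U0_bound in auto)
  have iR: "integrable lborel (\<lambda>t. exp (- z) * ?R t)"
    unfolding T_def by (intro integrable_mult_right integrable_stieltjes[OF a0 a1 mz, where M=psi_sup])
      (use U1_bound in auto)
  have "(\<integral>t. T t * ((psi_hat z - complex_of_real (U0 t)) / (complex_of_real t - z)
        + (psi_hat z - exp (- z) * complex_of_real (U1 t)) / (complex_of_real t + z)) \<partial>lborel)
      = (\<integral>t. psi_hat z * ?P t - ?B t - exp (- z) * ?R t \<partial>lborel)"
    by (intro Bochner_Integration.integral_cong refl) (simp add: algebra_simps add_divide_distrib diff_divide_distrib)
  also have "\<dots> = psi_hat z * (\<integral>t. ?P t \<partial>lborel) - (\<integral>t. ?B t \<partial>lborel) - exp (- z) * (\<integral>t. ?R t \<partial>lborel)"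
    by (simp only: Bochner_Integration.integral_diff[OF Bochner_Integration.integrable_diff[OF iP iB] iR]
                   Bochner_Integration.integral_diff[OF iP iB] integral_mult_right_zero)
  also have "(\<integral>t. ?P t \<partial>lborel) = (LBINT t:{0<..}. complex_of_real (2 * t powr a) / (complex_of_real t ^ 2 - z ^ 2))"
    unfolding set_lebesgue_integral_def
  proof (intro Bochner_Integration.integral_cong refl)
    fix t :: real
    show "?P t = indicator {0<..} t *\<^sub>R (complex_of_real (2 * t powr a) / (complex_of_real t ^ 2 - z ^ 2))"
      using stieltjes_partial_fractions[OF z, of t a] by (cases "0 < t") (simp_all add: T_def)
  qed
  also have "(\<integral>t. ?B t \<partial>lborel) = (LBINT t:{0<..}. complex_of_real (t powr (a - 1) * ufun b \<phi> 0 t) / (complex_of_real t - z))"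
    unfolding set_lebesgue_integral_def ufun_0_eq
    by (intro Bochner_Integration.integral_cong refl) (simp add: T_def indicator_def)
  also have "(\<integral>t. ?R t \<partial>lborel) = (LBINT t:{0<..}. complex_of_real (t powr (a - 1) * ufun b \<phi> 1 t) / (complex_of_real t - - z))"
    unfolding set_lebesgue_integral_def ufun_1_eq
    by (intro Bochner_Integration.integral_cong refl) (simp add: T_def indicator_def)
  finally show ?thesis unfolding T_def .
qed

lemma laplace_identity:
  assumes z: "Im z \<noteq> 0" and Lnz: "Lam a b lam z \<noteq> 0"
  shows "laplace01 \<phi> z = laplace01 \<phi> (- complex_of_real b)
           - (z + complex_of_real b) / Lam a b lam z
             * (Phi0 a b lam \<phi> z + exp (- z) * Phi1 a b lam \<phi> (- z))"
proof -
  have zb: "z + complex_of_real b \<noteq> 0" using z by (auto simp: complex_eq_iff)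
  have bz: "complex_of_real b - z \<noteq> 0" using z by (auto simp: complex_eq_iff)
  have tz1: "complex_of_real t - z \<noteq> 0" if "0 < t" for t using z by (auto simp: complex_eq_iff)
  have tz2: "complex_of_real t + z \<noteq> 0" if "0 < t" for t using z by (auto simp: complex_eq_iff)
  have c0: "complex_of_real c \<noteq> 0" using c_pos by simp
  have laplace_psi_hat: "laplace01 \<phi> z = laplace01 \<phi> (- complex_of_real b) - (z + complex_of_real b) * psi_hat z"
    using psi_hat_eq[OF zb] zb by (simp add: field_simps)
  have Gamma_g_hat: "complex_of_real (Gamma a) * ((z - complex_of_real b) * complex_of_real lam * laplace01 \<phi> z + exp (- z) * (complex_of_real lam * complex_of_real (\<phi> 1)))
      = complex_of_real c * (psi_hat z * (LBINT t:{0<..}. complex_of_real (2 * t powr a) / (complex_of_real t ^ 2 - z ^ 2))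
      - (LBINT t:{0<..}. complex_of_real (t powr (a - 1) * ufun b \<phi> 0 t) / (complex_of_real t - z))
      - exp (- z) * (LBINT t:{0<..}. complex_of_real (t powr (a - 1) * ufun b \<phi> 1 t) / (complex_of_real t - - z)))"
    using Gamma_g_hat_eq[OF tz1 tz2] g_hat_eq[OF bz] stieltjes_split[OF z] by simp
  show ?thesis
  proof (rule laplace_identity_algebra[OF c0 Lnz laplace_psi_hat Gamma_g_hat])
    show "complex_of_real (Gamma a * lam / c_alpha a) = complex_of_real (Gamma a) * complex_of_real lam / complex_of_real c"
      by (simp add: c_def)
    show "Lam a b lam z = complex_of_real (Gamma a * lam / c_alpha a) * (z ^ 2 - complex_of_real b ^ 2) + (LBINT t:{0<..}. complex_of_real (2 * t powr a) / (complex_of_real t ^ 2 - z ^ 2))"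
      by (simp add: Lam_def)
    show "Phi0 a b lam \<phi> z = - complex_of_real (Gamma a * lam / c_alpha a) * (complex_of_real b - z) * laplace01 \<phi> (- complex_of_real b)
        + (LBINT t:{0<..}. complex_of_real (t powr (a - 1) * ufun b \<phi> 0 t) / (complex_of_real t - z))"
      by (simp add: Phi0_def psi_0_eq_laplace01)
    show "Phi1 a b lam \<phi> (- z) = - complex_of_real (Gamma a * lam / c_alpha a) * (- complex_of_real (\<phi> 1))
        + (LBINT t:{0<..}. complex_of_real (t powr (a - 1) * ufun b \<phi> 1 t) / (complex_of_real t - - z))"
      by (simp add: Phi1_def psi_deriv_at_1)
  qed
qed

end

theorem lemma5p1:
  fixes H \<beta> lam :: real and \<phi> :: "real \<Rightarrow> real" and z :: complex
  assumes H: "1/2 < H" "H < 1"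
    and lam_pos: "lam > 0"
    and meas: "set_borel_measurable lborel {0..1} \<phi>"
    and L2: "set_integrable lborel {0..1} (\<lambda>x. (\<phi> x)\<^sup>2)"
    and nonzero: "\<not> (AE x in lborel. x \<in> {0..1} \<longrightarrow> \<phi> x = 0)"
    and eigen: "\<forall>x\<in>{0..1}. (LBINT y=0..1. fou_kernel (2 - 2*H) \<beta> x y * \<phi> y) = lam * \<phi> x"
    and z_nonreal: "Im z \<noteq> 0"
    and Lam_nz: "Lam (2 - 2*H) \<beta> lam z \<noteq> 0"
  shows "laplace01 \<phi> z = laplace01 \<phi> (- complex_of_real \<beta>)
           - (z + complex_of_real \<beta>) / Lam (2 - 2*H) \<beta> lam z
             * (Phi0 (2 - 2*H) \<beta> lam \<phi> z + exp (- z) * Phi1 (2 - 2*H) \<beta> lam \<phi> (- z))"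
  \<comment> \<open>The identity holds for every eigenpair with lam > 0.\<close>
proof -
  interpret fou_eigenpair "2 - 2*H" \<beta> lam \<phi>
    by unfold_locales (use H lam_pos meas L2 eigen in auto)
  show ?thesis by (rule laplace_identity[OF z_nonreal Lam_nz])
qed

end
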